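(* Consider the patient model in the context with actions from an $(r,k)$-exploratory policy. Choose $\tau\in(0,1)$ such that $p_1(\tau):=\mathbf P\big(|w_{t-1}|\geq\frac{\sqrt{1-\tau^2}}{\tau}\frac{1+4\sqrt M}{2\sqrt{2M}}\big)>0$, and let $p:=\min\{p_1(\tau),\frac{r\underline p}{M+1}\}$ where $\underline p:=\sigma(-C_x-\bar\mu)$. Then the process $(z_t)_{t\geq1}$, $z_t:=[x_t\ u_t^\top\ d_t^\top]^\top$, satisfies the $\big(k,\frac{1-\tau^2}{8M}I_{2M+1},p\big)$ block martingale small ball condition with respect to the filtration $\mathcal F^w_t:=\sigma(x_{0:t},u_{0:t},d_{0:t},w_{0:t-1})$.
   Context: Patient model: $M\geq1$ treatments; $\mathcal U:=\{v\in\{0,1\}^M:\|v\|_0\leq1\}$. $x_{t+1}=ax_t+b^\top u_t+c^\top d_t+w_t$, adherence $d^i_t\mid x_t,u^i_t\sim\mathrm{Bernoulli}(u^i_t\sigma(x_t+\mu_i))$, $\sigma$ the sigmoid; $x_1$ distributed as the noise. Parameters $a\in[0,\bar a]$ (known $\bar a\in(0,1)$), $\|b\|_\infty\leq\bar b$, $\|c\|_\infty\leq\bar c$, $\mu\in[-\bar\mu,\bar\mu]^M$. $x_t,u_t,d_t$ fully observed. Noise $w_t$ i.i.d., zero-symmetric, $\sigma_s^2$-subgaussian, $|w_t|\leq\bar w$ ($\bar w>0$), log-concave density, known variance $\sigma_w^2>0$. $C_x:=\frac{\bar b+\bar c+\bar w}{1-\bar a}$. Conventions $x_0=0$, $u_0=d_0=\mathbf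 0_M$, $w_0\sim w$; $\mathcal F_t:=\sigma(x_{0:t},u_{0:t},d_{0:t},w_{0:t})$. An $(r,k)$-exploratory policy ($r\in(0,1]$, $k\in\mathbb N$): in every block $\{j+1,\dots,j+k\}$, $j\geq0$, almost surely at least $\lceil rk\rceil$ actions are drawn uniformly from $\mathcal U$ independently of $\mathcal F_{t-1}$ (which steps are exploratory may depend on history). Block martingale small ball (BMSB): an $\{\mathcal G_t\}$-adapted process $(Z_t)$ in $\mathbb R^d$ satisfies the $(k,\Gamma,p)$-BMSB condition ($k$ a positive integer, $\Gamma\succ0$, $0\leq p\leq1$) if for every fixed $\lambda\in\mathbb R^d$ with $\|\lambda\|_2=1$ and every $j\geq0$, $\frac1k\sum_{i=1}^k\mathbf P(|\lambda^\top Z_{j+i}|\geq\sqrt{\lambda^\top\Gamma\lambda}\mid\mathcal G_j)\geq p$ almost surely. *)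

theory Defs
  imports "HOL-Probability.Probability"
begin

definition sigmoid :: "real \<Rightarrow> real" where
  "sigmoid y = 1 / (1 + exp (- y))"

text \<open>Action set: 0/1 vectors with at most one nonzero entry (M = CARD('m)).\<close>
definition actions :: "(real ^ 'm) set" where
  "actions = {v. (\<forall>i. v $ i \<in> {0, 1}) \<and> card {i. v $ i \<noteq> 0} \<le> 1}"

definition rv_events :: "'a measure \<Rightarrow> ('a \<Rightarrow> 'b::topological_space) \<Rightarrow> 'a set set" where
  "rv_events M f = {f -` B \<inter> space M | B. B \<in> sets borel}"

definition filtF :: "'a measure \<Rightarrow> (nat \<Rightarrow> 'a \<Rightarrow> real) \<Rightarrow> (nat \<Rightarrow> 'a \<Rightarrow> real ^ 'm)
    \<Rightarrow> (nat \<Rightarrow> 'a \<Rightarrow> real ^ 'm) \<Rightarrow> (nat \<Rightarrow> 'a \<Rightarrow> real) \<Rightarrow> nat \<Rightarrow> 'a measure" where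
  "filtF M x u d w t = sigma (space M)
     (\<Union>s\<in>{..t}. rv_events M (x s) \<union> rv_events M (u s) \<union> rv_events M (d s) \<union> rv_events M (w s))"

definition filtFw :: "'a measure \<Rightarrow> (nat \<Rightarrow> 'a \<Rightarrow> real) \<Rightarrow> (nat \<Rightarrow> 'a \<Rightarrow> real ^ 'm)
    \<Rightarrow> (nat \<Rightarrow> 'a \<Rightarrow> real ^ 'm) \<Rightarrow> (nat \<Rightarrow> 'a \<Rightarrow> real) \<Rightarrow> nat \<Rightarrow> 'a measure" where
  "filtFw M x u d w t = sigma (space M)
     ((\<Union>s\<in>{..t}. rv_events M (x s) \<union> rv_events M (u s) \<union> rv_events M (d s))
      \<union> (\<Union>s\<in>{..<t}. rv_events M (w s)))"

text \<open>History just before adherence is realised at time t: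
  sigma(x_{0:t}, u_{0:t}, d_{0:t-1}, w_{0:t-1}).\<close>
definition filtH :: "'a measure \<Rightarrow> (nat \<Rightarrow> 'a \<Rightarrow> real) \<Rightarrow> (nat \<Rightarrow> 'a \<Rightarrow> real ^ 'm)
    \<Rightarrow> (nat \<Rightarrow> 'a \<Rightarrow> real ^ 'm) \<Rightarrow> (nat \<Rightarrow> 'a \<Rightarrow> real) \<Rightarrow> nat \<Rightarrow> 'a measure" where
  "filtH M x u d w t = sigma (space M)
     ((\<Union>s\<in>{..t}. rv_events M (x s) \<union> rv_events M (u s))
      \<union> (\<Union>s\<in>{..<t}. rv_events M (d s) \<union> rv_events M (w s)))"

text \<open>Block martingale small ball condition (k, Gamma, p) for a G-adapted process Z;
  Gamma is a symmetric positive definite linear operator; conditional probabilities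
  are conditional expectations of indicators.\<close>
definition BMSB :: "'a measure \<Rightarrow> (nat \<Rightarrow> 'a measure) \<Rightarrow> (nat \<Rightarrow> 'a \<Rightarrow> 'd::euclidean_space)
    \<Rightarrow> nat \<Rightarrow> ('d \<Rightarrow> 'd) \<Rightarrow> real \<Rightarrow> bool" where
  "BMSB M G Z k \<Gamma> p \<longleftrightarrow>
     k > 0 \<and> linear \<Gamma> \<and> (\<forall>v w. v \<bullet> \<Gamma> w = \<Gamma> v \<bullet> w) \<and> (\<forall>v. v \<noteq> 0 \<longrightarrow> v \<bullet> \<Gamma> v > 0)
     \<and> 0 \<le> p \<and> p \<le> 1
     \<and> (\<forall>t. subalgebra M (G t)) \<and> (\<forall>s t. s \<le> t \<longrightarrow> sets (G s) \<subseteq> sets (G t))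
     \<and> (\<forall>t. Z t \<in> borel_measurable (G t))
     \<and> (\<forall>l j. norm l = 1 \<longrightarrow>
          (AE \<omega> in M. (1 / real k) * (\<Sum>i=1..k. real_cond_exp M (G j)
              (indicator {\<omega>'\<in>space M. \<bar>l \<bullet> Z (j + i) \<omega>'\<bar> \<ge> sqrt (l \<bullet> \<Gamma> l)}) \<omega>) \<ge> p))"

definition noise_law :: "real measure \<Rightarrow> real \<Rightarrow> real \<Rightarrow> real \<Rightarrow> bool" where
  "noise_law W wbar sig_s sig_w \<longleftrightarrow>
     prob_space W \<and> sets W = sets borel
     \<and> distr W borel uminus = W
     \<and> (\<forall>s. integrable W (\<lambda>y. exp (s * y)) \<and> (\<integral>y. exp (s * y) \<partial>W) \<le> exp (sig_s\<^sup>2 * s\<^sup>2 / 2))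
     \<and> (AE y in W. \<bar>y\<bar> \<le> wbar)
     \<and> (\<exists>f. f \<in> borel_measurable borel \<and> (\<forall>y. f y \<ge> 0) \<and> W = density lborel (\<lambda>y. ennreal (f y))
          \<and> (\<forall>y z \<theta>. 0 \<le> \<theta> \<and> \<theta> \<le> 1 \<longrightarrow>
               f ((1 - \<theta>) * y + \<theta> * z) \<ge> f y powr (1 - \<theta>) * f z powr \<theta>))
     \<and> sig_w > 0 \<and> integrable W (\<lambda>y. y\<^sup>2) \<and> (\<integral>y. y\<^sup>2 \<partial>W) = sig_w\<^sup>2"

end

theory Submission
  imports Defs
begin

text \<open>
  Fix a unit direction \<open>l = (lx, lu, ld)\<close> and a block \<open>{j+1..j+k}\<close>.  It suffices to show
  \<open>k * p * P(A) \<le> (\<Sum>t. P(A \<inter> {\<bar>l \<bullet> z t\<bar> \<ge> g}))\<close> for every \<open>A \<in> F\<^sup>w\<^sub>j\<close>, where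
  \<open>g = sqrt ((1 - \<tau>\<^sup>2) / (8 M))\<close>; a lower bound on all such set integrals is a lower bound on
  the sum of the conditional probabilities.

  If \<open>\<bar>lx\<bar> \<ge> \<tau>\<close>, the state \<open>x t\<close> is an \<open>F\<^sup>w\<^sub>t\<^sub>-\<^sub>1\<close>-measurable drift plus the fresh
  noise \<open>w (t - 1)\<close>, which is independent of \<open>F\<^sup>w\<^sub>t\<^sub>-\<^sub>1\<close>.  By Anderson's inequality for
  the even log-concave noise density, a shift can only increase the tail probability, so
  \<open>\<bar>x t\<bar> \<ge> T\<close> with probability at least \<open>p\<^sub>1\<close> whatever the drift.  The action and
  adherence part of \<open>l \<bullet> z t\<close> is at most \<open>sqrt 2 * sqrt (1 - \<tau>\<^sup>2)\<close>, and \<open>T\<close> is chosen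
  so that \<open>\<tau> * T - sqrt 2 * sqrt (1 - \<tau>\<^sup>2) = g\<close>.

  If \<open>\<bar>lx\<bar> < \<tau>\<close>, some coordinate \<open>i\<close> has \<open>lu\<^sub>i\<^sup>2 + ld\<^sub>i\<^sup>2 \<ge> 8 g\<^sup>2\<close>, so one of
  \<open>lx x t\<close>, \<open>lx x t + lu\<^sub>i\<close>, \<open>lx x t + lu\<^sub>i + ld\<^sub>i\<close> has modulus at least \<open>g\<close>, and which
  one is already decided at time \<open>t - 1\<close>.  At an exploratory step the matching action
  (\<open>0\<close> or the \<open>i\<close>-th treatment) is drawn with probability \<open>1 / (M + 1)\<close>, and since
  \<open>\<bar>x t\<bar> \<le> C\<^sub>x\<close> the patient adheres, and fails to adhere, with probability at least
  \<open>sigmoid (- C\<^sub>x - mubar)\<close> each.  A block contains at least \<open>\<lceil>r k\<rceil>\<close> exploratory steps.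
\<close>

lemma sigmoid_pos: "0 < sigmoid y"
  unfolding sigmoid_def by (simp add: add_pos_pos)

lemma sigmoid_less_1: "sigmoid y < 1"
  unfolding sigmoid_def by (simp add: add_pos_pos)

lemma one_minus_sigmoid: "1 - sigmoid y = sigmoid (- y)"
proof -
  have "1 + exp (- y) > 0" "1 + exp y > 0" by (simp_all add: add_pos_pos)
  moreover have "exp (- y) * exp y = 1" by (simp add: exp_minus_inverse mult.commute)
  ultimately show ?thesis unfolding sigmoid_def by (simp add: field_simps)
qed

lemma sigmoid_mono: "y \<le> z \<Longrightarrow> sigmoid y \<le> sigmoid z"
  unfolding sigmoid_def by (simp add: add_pos_pos frac_le)

lemma borel_measurable_sigmoid[measurable]: "sigmoid \<in> borel_measurable borel"
  unfolding sigmoid_def[abs_def] by measurable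

lemma borel_measurable_vec_nth[measurable]: "(\<lambda>v::real ^ 'n. v $ i) \<in> borel_measurable borel"
  by (intro borel_measurable_continuous_onI continuous_intros)

lemma log_concave_even_le_shift:
  fixes f :: "real \<Rightarrow> real"
  assumes nonneg: "\<And>y. 0 \<le> f y"
    and log_concave: "\<And>y z \<theta>. 0 \<le> \<theta> \<and> \<theta> \<le> 1 \<longrightarrow>
      f ((1 - \<theta>) * y + \<theta> * z) \<ge> f y powr (1 - \<theta>) * f z powr \<theta>"
    and even: "f (- y) = f y" and y: "y < 0" and h: "0 \<le> h" "h \<le> - 2 * y"
  shows "f y \<le> f (y + h)"
proof -
  define \<theta> where "\<theta> = h / (- 2 * y)"
  have \<theta>: "0 \<le> \<theta>" "\<theta> \<le> 1" using y h by (auto simp: \<theta>_def divide_simps)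
  have "(1 - \<theta>) * y + \<theta> * (- y) = y + h" using y by (simp add: \<theta>_def field_simps)
  then have "f y powr (1 - \<theta>) * f (- y) powr \<theta> \<le> f (y + h)"
    using log_concave[of \<theta> y "- y"] \<theta> by simp
  moreover have "f y powr (1 - \<theta>) * f (- y) powr \<theta> = f y"
    using nonneg[of y] even by (cases "f y = 0") (simp_all add: powr_add[symmetric])
  ultimately show ?thesis by simp
qed

lemma nn_integral_indicator_Int_Diff:
  assumes "f \<in> borel_measurable M" "S \<in> sets M" "R \<in> sets M"
  shows "(\<integral>\<^sup>+y. f y * indicator S y \<partial>M)
    = (\<integral>\<^sup>+y. f y * indicator (S \<inter> R) y \<partial>M) + (\<integral>\<^sup>+y. f y * indicator (S - R) y \<partial>M)"
proof -
  have "(\<integral>\<^sup>+y. f y * indicator S y \<partial>M)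
      = (\<integral>\<^sup>+y. f y * indicator (S \<inter> R) y + f y * indicator (S - R) y \<partial>M)"
    by (intro nn_integral_cong) (auto simp: indicator_def)
  then show ?thesis using assms by (simp add: nn_integral_add)
qed

text \<open>Translating by \<open>max c (2 * T)\<close> maps the part of
  the shifted window outside the centred one into the part of the centred window outside the
  shifted one, and the density can only grow along the way.\<close>
lemma nn_integral_even_log_concave_window_le:
  fixes f :: "real \<Rightarrow> real"
  assumes meas: "f \<in> borel_measurable borel" and nonneg: "\<And>y. 0 \<le> f y"
    and log_concave: "\<And>y z \<theta>. 0 \<le> \<theta> \<and> \<theta> \<le> 1 \<longrightarrow>
      f ((1 - \<theta>) * y + \<theta> * z) \<ge> f y powr (1 - \<theta>) * f z powr \<theta>"
    and even: "AE y in lborel. f (- y) = f y" and c: "0 \<le> c"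
  shows "(\<integral>\<^sup>+y. ennreal (f y) * indicator {y. \<bar>c + y\<bar> < T} y \<partial>lborel)
       \<le> (\<integral>\<^sup>+y. ennreal (f y) * indicator {y. \<bar>y\<bar> < T} y \<partial>lborel)"
proof -
  define A where "A = {y::real. \<bar>c + y\<bar> < T}"
  define B where "B = {y::real. \<bar>y\<bar> < T}"
  define h where "h = max c (2 * T)"
  have [measurable]: "A \<in> sets borel" "B \<in> sets borel" unfolding A_def B_def by measurable
  have "(\<integral>\<^sup>+y. ennreal (f y) * indicator (A - B) y \<partial>lborel) \<le> (\<integral>\<^sup>+y. ennreal (f (h + y)) * indicator (A - B) y \<partial>lborel)"
  proof (rule nn_integral_mono_AE)
    from even show "AE y in lborel. ennreal (f y) * indicator (A - B) y \<le> ennreal (f (h + y)) * indicator (A - B) y"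
    proof eventually_elim
      case (elim y)
      have "f y \<le> f (y + h)" if "y \<in> A - B"
      proof (rule log_concave_even_le_shift[OF nonneg log_concave elim])
        show "y < 0" "0 \<le> h" "h \<le> - 2 * y" using that c by (auto simp: A_def B_def h_def)
      qed
      then show ?case by (auto simp: indicator_def add.commute intro: ennreal_leI)
    qed
  qed
  also have "\<dots> = (\<integral>\<^sup>+z. ennreal (f z) * indicator (A - B) (z - h) \<partial>lborel)"
    using nn_integral_real_affine[of "\<lambda>z. ennreal (f z) * indicator (A - B) (z - h)" 1 h] meas by simp
  also have "\<dots> \<le> (\<integral>\<^sup>+z. ennreal (f z) * indicator (B - A) z \<partial>lborel)"
  proof (rule nn_integral_mono_AE)
    from AE_lborel_singleton[of T]
    show "AE z in lborel. ennreal (f z) * indicator (A - B) (z - h) \<le> ennreal (f z) * indicator (B - A) z"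
    proof eventually_elim
      case (elim z)
      have "z \<in> B - A" if "z - h \<in> A - B"
        using that c elim by (auto simp: A_def B_def h_def split: if_splits)
      then show ?case by (auto simp: indicator_def)
    qed
  qed
  finally show ?thesis
    using nn_integral_indicator_Int_Diff[of "\<lambda>y. ennreal (f y)" lborel A B]
      nn_integral_indicator_Int_Diff[of "\<lambda>y. ennreal (f y)" lborel B A] meas
    by (simp add: Int_commute add_left_mono flip: A_def B_def)
qed

lemma noise_law_emeasure_reflect:
  assumes noise: "noise_law W wbar sig_s sig_w" and S: "S \<in> sets borel"
  shows "emeasure W (uminus -` S) = emeasure W S"
proof -
  have sets: "sets W = sets borel" and reflect: "distr W borel uminus = W"
    using noise by (auto simp: noise_law_def)
  have "(uminus :: real \<Rightarrow> real) \<in> borel \<rightarrow>\<^sub>M borel" by measurable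
  then have uminus: "(uminus :: real \<Rightarrow> real) \<in> W \<rightarrow>\<^sub>M borel"
    using measurable_cong_sets[OF sets refl] by blast
  have "emeasure W S = emeasure (distr W borel uminus) S" using reflect by simp
  also have "\<dots> = emeasure W (uminus -` S \<inter> space W)"
    by (rule emeasure_distr[OF uminus S])
  finally show ?thesis using sets_eq_imp_space_eq[OF sets] by simp
qed

lemma noise_law_even_density:
  assumes noise: "noise_law W wbar sig_s sig_w"
  obtains f where "f \<in> borel_measurable borel" "\<And>y. 0 \<le> f y" "W = density lborel f"
    "\<And>y z \<theta>. 0 \<le> \<theta> \<and> \<theta> \<le> 1 \<longrightarrow> f ((1 - \<theta>) * y + \<theta> * z) \<ge> f y powr (1 - \<theta>) * f z powr \<theta>"
    "AE y in lborel. f (- y) = f y"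
proof -
  from noise obtain f where meas: "f \<in> borel_measurable borel" and nonneg: "\<And>y. 0 \<le> f y"
    and W: "W = density lborel f"
    and log_concave: "\<And>y z \<theta>. 0 \<le> \<theta> \<and> \<theta> \<le> 1 \<longrightarrow> f ((1 - \<theta>) * y + \<theta> * z) \<ge> f y powr (1 - \<theta>) * f z powr \<theta>"
    unfolding noise_law_def by blast
  have "density lborel f = density lborel (\<lambda>y. f (- y))"
  proof (rule measure_eqI)
    fix S assume "S \<in> sets (density lborel f)"
    then have S: "S \<in> sets borel" by simp
    have "emeasure (density lborel f) S = emeasure W (uminus -` S)"
      using noise_law_emeasure_reflect[OF noise S] W by simp
    also have "\<dots> = (\<integral>\<^sup>+y. ennreal (f y) * indicator (uminus -` S) y \<partial>lborel)"
      using measurable_sets_borel[OF borel_measurable_uminus[OF measurable_ident] S] meas W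
      by (simp add: emeasure_density)
    also have "\<dots> = (\<integral>\<^sup>+y. ennreal (f (- y)) * indicator (uminus -` S) (- y) \<partial>lborel)"
      using nn_integral_real_affine[of "\<lambda>y. ennreal (f y) * indicator (uminus -` S) y" "-1" 0] meas S by simp
    also have "\<dots> = emeasure (density lborel (\<lambda>y. f (- y))) S"
      using S meas by (simp add: emeasure_density indicator_def mult.commute)
    finally show "emeasure (density lborel f) S = emeasure (density lborel (\<lambda>y. f (- y))) S" .
  qed simp
  then have "AE y in lborel. ennreal (f y) = ennreal (f (- y))"
    using meas by (subst (asm) sigma_finite_measure.density_unique_iff[OF sigma_finite_lborel]) auto
  then have "AE y in lborel. f (- y) = f y"
    by eventually_elim (use nonneg in simp)
  then show ?thesis using that meas nonneg W log_concave by blast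
qed

lemma noise_law_shifted_tail_ge:
  assumes noise: "noise_law W wbar sig_s sig_w"
  shows "measure W {y. T \<le> \<bar>y\<bar>} \<le> measure W {y. T \<le> \<bar>c + y\<bar>}"
proof -
  have "prob_space W" and sets: "sets W = sets borel" using noise by (auto simp: noise_law_def)
  interpret W: prob_space W by fact
  have space: "space W = UNIV" using sets_eq_imp_space_eq[OF sets] by simp
  have tail: "measure W {y. T \<le> \<bar>c + y\<bar>} = 1 - measure W {y. \<bar>c + y\<bar> < T}" for c
  proof -
    have "{y::real. \<bar>c + y\<bar> < T} \<in> sets W" unfolding sets by measurable
    moreover have "space W - {y. \<bar>c + y\<bar> < T} = {y. T \<le> \<bar>c + y\<bar>}" by (auto simp: space)
    ultimately show ?thesis using W.prob_compl by metis
  qed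
  have centred_ge: "measure W {y. T \<le> \<bar>y\<bar>} \<le> measure W {y. T \<le> \<bar>c + y\<bar>}" if c: "0 \<le> c" for c
  proof -
    obtain f where meas: "f \<in> borel_measurable borel" and "\<And>y. 0 \<le> f y" and W: "W = density lborel f"
      and "\<And>y z \<theta>. 0 \<le> \<theta> \<and> \<theta> \<le> 1 \<longrightarrow> f ((1 - \<theta>) * y + \<theta> * z) \<ge> f y powr (1 - \<theta>) * f z powr \<theta>"
      and "AE y in lborel. f (- y) = f y"
      using noise_law_even_density[OF noise] by blast
    note window_le = nn_integral_even_log_concave_window_le[OF this(1,2,4,5) c, of T]
    have "emeasure W {y. \<bar>c + y\<bar> < T} \<le> emeasure W {y. \<bar>y\<bar> < T}"
      using window_le meas by (simp add: W emeasure_density)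
    then have "measure W {y. \<bar>c + y\<bar> < T} \<le> measure W {y. \<bar>y\<bar> < T}"
      by (simp add: W.emeasure_eq_measure)
    then show ?thesis using tail[of c] tail[of 0] by simp
  qed
  show ?thesis
  proof (cases "0 \<le> c")
    case False
    have "{y::real. T \<le> \<bar>- c + y\<bar>} \<in> sets borel" by measurable
    from noise_law_emeasure_reflect[OF noise this]
    have "measure W {y. T \<le> \<bar>c + y\<bar>} = measure W {y. T \<le> \<bar>- c + y\<bar>}"
      by (simp add: measure_def vimage_def abs_minus_commute)
    then show ?thesis using centred_ge[of "- c"] False by simp
  qed (rule centred_ge)
qed

lemma (in prob_space) indep_restricted_pair_distr:
  assumes G: "subalgebra M G" and A: "A \<in> sets G"
    and X: "X \<in> G \<rightarrow>\<^sub>M N1" and Y: "Y \<in> M \<rightarrow>\<^sub>M N2"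
    and indep: "\<And>A' B. A' \<in> sets G \<Longrightarrow> B \<in> sets N2 \<Longrightarrow>
      prob (A' \<inter> (Y -` B \<inter> space M)) = prob A' * prob (Y -` B \<inter> space M)"
  defines "MA \<equiv> density M (indicator A)"
  shows "distr MA N1 X \<Otimes>\<^sub>M distr M N2 Y = distr MA (N1 \<Otimes>\<^sub>M N2) (\<lambda>\<omega>. (X \<omega>, Y \<omega>))"
proof (rule pair_measure_eqI)
  have AM: "A \<in> sets M" using A G by (auto simp: subalgebra_def)
  have XM: "X \<in> M \<rightarrow>\<^sub>M N1" using measurable_from_subalg[OF G X] .
  interpret MA: finite_measure MA unfolding MA_def by (rule finite_measure_restricted[OF AM])
  have [simp]: "space MA = space M" "sets MA = sets M" by (simp_all add: MA_def)
  have XMA: "X \<in> MA \<rightarrow>\<^sub>M N1" and YMA: "Y \<in> MA \<rightarrow>\<^sub>M N2"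
    using XM Y by (simp_all cong: measurable_cong_sets)
  interpret PX: finite_measure "distr MA N1 X" by (rule MA.finite_measure_distr[OF XMA])
  interpret PY: prob_space "distr M N2 Y" by (rule prob_space_distr[OF Y])
  have emA: "emeasure MA E = emeasure M (A \<inter> E)" if "E \<in> sets M" for E
    unfolding MA_def using emeasure_restricted[OF AM that] .
  show "sigma_finite_measure (distr MA N1 X)" "sigma_finite_measure (distr M N2 Y)" ..
  fix B1 B2 assume "B1 \<in> sets (distr MA N1 X)" and "B2 \<in> sets (distr M N2 Y)"
  then have B1: "B1 \<in> sets N1" and B2: "B2 \<in> sets N2" by auto
  have AX: "A \<inter> (X -` B1 \<inter> space M) \<in> sets G"
    using A measurable_sets[OF X B1] G by (auto simp: subalgebra_def)
  have "emeasure (distr MA N1 X) B1 * emeasure (distr M N2 Y) B2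
      = emeasure M (A \<inter> (X -` B1 \<inter> space M)) * emeasure M (Y -` B2 \<inter> space M)"
    using B1 B2 XMA Y measurable_sets[OF XM B1] by (simp add: emeasure_distr emA)
  also have "\<dots> = emeasure M ((A \<inter> (X -` B1 \<inter> space M)) \<inter> (Y -` B2 \<inter> space M))"
    using indep[OF AX B2] by (simp add: emeasure_eq_measure ennreal_mult[symmetric])
  also have "\<dots> = emeasure MA ((\<lambda>\<omega>. (X \<omega>, Y \<omega>)) -` (B1 \<times> B2) \<inter> space MA)"
    using measurable_sets[OF measurable_Pair[OF XM Y], of "B1 \<times> B2"] B1 B2
    by (subst emA) (auto intro!: arg_cong[where f = "emeasure M"])
  also have "\<dots> = emeasure (distr MA (N1 \<Otimes>\<^sub>M N2) (\<lambda>\<omega>. (X \<omega>, Y \<omega>))) (B1 \<times> B2)"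
    using B1 B2 XMA YMA by (intro emeasure_distr[symmetric]) auto
  finally show "emeasure (distr MA N1 X) B1 * emeasure (distr M N2 Y) B2
      = emeasure (distr MA (N1 \<Otimes>\<^sub>M N2) (\<lambda>\<omega>. (X \<omega>, Y \<omega>))) (B1 \<times> B2)" .
qed simp

text \<open>The freezing lemma, as a lower bound: conditionally on \<open>G\<close>, the variable \<open>X\<close> is frozen
  and \<open>Y\<close> keeps its law.\<close>
lemma (in prob_space) indep_freezing_ge:
  assumes G: "subalgebra M G" and A: "A \<in> sets G"
    and X: "X \<in> G \<rightarrow>\<^sub>M N1" and Y: "Y \<in> M \<rightarrow>\<^sub>M N2"
    and indep: "\<And>A' B. A' \<in> sets G \<Longrightarrow> B \<in> sets N2 \<Longrightarrow>
      prob (A' \<inter> (Y -` B \<inter> space M)) = prob A' * prob (Y -` B \<inter> space M)"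
    and S: "S \<in> sets (N1 \<Otimes>\<^sub>M N2)"
    and q: "\<And>v. v \<in> space N1 \<Longrightarrow> q \<le> prob {\<omega>\<in>space M. (v, Y \<omega>) \<in> S}"
  shows "q * prob A \<le> prob (A \<inter> {\<omega>\<in>space M. (X \<omega>, Y \<omega>) \<in> S})"
proof (cases "q \<ge> 0")
  case False
  have "q * prob A \<le> 0" using False by (simp add: mult_nonpos_nonneg)
  then show ?thesis using measure_nonneg order_trans by blast
next
  case q0: True
  have AM: "A \<in> sets M" using A G by (auto simp: subalgebra_def)
  have XM: "X \<in> M \<rightarrow>\<^sub>M N1" using measurable_from_subalg[OF G X] .
  define MA where "MA = density M (indicator A)"
  have [simp]: "space MA = space M" "sets MA = sets M" by (simp_all add: MA_def)
  have XMA: "X \<in> MA \<rightarrow>\<^sub>M N1" and YMA: "Y \<in> MA \<rightarrow>\<^sub>M N2"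
    using XM Y by (simp_all cong: measurable_cong_sets)
  interpret PY: prob_space "distr M N2 Y" by (rule prob_space_distr[OF Y])
  have emA: "emeasure MA E = emeasure M (A \<inter> E)" if "E \<in> sets M" for E
    unfolding MA_def using emeasure_restricted[OF AM that] .
  have "emeasure M (A \<inter> {\<omega>\<in>space M. (X \<omega>, Y \<omega>) \<in> S})
      = emeasure (distr MA (N1 \<Otimes>\<^sub>M N2) (\<lambda>\<omega>. (X \<omega>, Y \<omega>))) S"
    using S XMA YMA measurable_sets[OF measurable_Pair[OF XM Y] S]
    by (subst emeasure_distr) (auto simp: emA intro!: arg_cong[where f = "emeasure M"])
  also have "\<dots> = (\<integral>\<^sup>+v. emeasure (distr M N2 Y) (Pair v -` S) \<partial>distr MA N1 X)"
    using S by (simp add: PY.emeasure_pair_measure_alt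
      flip: indep_restricted_pair_distr[OF G A X Y indep, folded MA_def])
  also have "\<dots> \<ge> (\<integral>\<^sup>+v. ennreal q \<partial>distr MA N1 X)"
  proof (rule nn_integral_mono)
    fix v assume "v \<in> space (distr MA N1 X)"
    then have v: "v \<in> space N1" by simp
    have "Pair v -` S \<in> sets N2" using S by (rule sets_Pair1)
    then have "emeasure (distr M N2 Y) (Pair v -` S) = ennreal (prob {\<omega>\<in>space M. (v, Y \<omega>) \<in> S})"
      using Y by (simp add: emeasure_distr emeasure_eq_measure vimage_def Int_def conj_commute)
    then show "ennreal q \<le> emeasure (distr M N2 Y) (Pair v -` S)"
      using q[OF v] by (simp add: ennreal_leI)
  qed
  also have "(\<integral>\<^sup>+v. ennreal q \<partial>distr MA N1 X) = ennreal q * emeasure M A"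
  proof -
    have "X -` space N1 \<inter> space M = space M" using XM by (auto dest: measurable_space)
    then show ?thesis
      using XMA sets.sets_into_space[OF AM] by (simp add: emeasure_distr emA Int_absorb2)
  qed
  finally show ?thesis
    using q0 by (simp add: emeasure_eq_measure ennreal_mult[symmetric] ennreal_le_iff)
qed

lemma (in prob_space) AE_ge_of_set_integral_ge:
  assumes G: "subalgebra M G" and h: "h \<in> borel_measurable G" "integrable M h"
    and ge: "\<And>A. A \<in> sets G \<Longrightarrow> c * prob A \<le> (\<integral>\<omega>. indicator A \<omega> * h \<omega> \<partial>M)"
  shows "AE \<omega> in M. c \<le> h \<omega>"
proof -
  have space: "space G = space M" using G by (simp add: subalgebra_def)
  define B where "B = {\<omega>\<in>space M. h \<omega> < c}"
  have "{\<omega>\<in>space G. h \<omega> < c} \<in> sets G" using h(1) by measurable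
  then have BG: "B \<in> sets G" by (simp add: B_def space)
  then have BM: "B \<in> events" using G by (auto simp: subalgebra_def)
  define g where "g = (\<lambda>\<omega>. indicator B \<omega> * (c - h \<omega>))"
  have g_int: "integrable M g"
    unfolding g_def using integrable_mult_indicator[OF BM Bochner_Integration.integrable_diff[OF integrable_const[of c] h(2)]] by simp
  have g_nonneg: "AE \<omega> in M. 0 \<le> g \<omega>" by (auto simp: g_def B_def indicator_def)
  have "integral\<^sup>L M g = c * prob B - (\<integral>\<omega>. indicator B \<omega> * h \<omega> \<partial>M)"
  proof -
    have "integral\<^sup>L M g = (\<integral>\<omega>. c * indicator B \<omega> - indicator B \<omega> * h \<omega> \<partial>M)"
      unfolding g_def by (intro Bochner_Integration.integral_cong) (auto simp: algebra_simps)
    also have "\<dots> = c * prob B - (\<integral>\<omega>. indicator B \<omega> * h \<omega> \<partial>M)"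
      using BM integrable_mult_indicator[OF BM h(2)]
      by (subst Bochner_Integration.integral_diff) (auto simp: less_top[symmetric])
    finally show ?thesis .
  qed
  also have "\<dots> \<le> 0" using ge[OF BG] by simp
  finally have "integral\<^sup>L M g = 0" using integral_nonneg_AE[OF g_nonneg] by simp
  then have "AE \<omega> in M. g \<omega> = 0" using integral_nonneg_eq_0_iff_AE[OF g_int g_nonneg] by simp
  with AE_space show ?thesis
    by eventually_elim (auto simp: g_def B_def indicator_def not_less split: if_splits)
qed

lemma (in prob_space) AE_sum_cond_prob_ge:
  assumes G: "subalgebra M G" and I: "finite I" and E: "\<And>i. i \<in> I \<Longrightarrow> E i \<in> events"
    and ge: "\<And>A. A \<in> sets G \<Longrightarrow> c * prob A \<le> (\<Sum>i\<in>I. prob (A \<inter> E i))"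
  shows "AE \<omega> in M. c \<le> (\<Sum>i\<in>I. real_cond_exp M G (indicator (E i)) \<omega>)"
proof -
  interpret sigma_finite_subalgebra M G
    by (rule finite_measure_subalgebra_is_sigma_finite) (unfold_locales, rule G)
  have int: "integrable M (indicator (E i) :: 'a \<Rightarrow> real)" if "i \<in> I" for i
    using E[OF that] by (intro integrable_real_indicator) (simp_all add: less_top[symmetric])
  show ?thesis
  proof (rule AE_ge_of_set_integral_ge[OF G])
    show "(\<lambda>\<omega>. \<Sum>i\<in>I. real_cond_exp M G (indicator (E i)) \<omega>) \<in> borel_measurable G" by measurable
    show "integrable M (\<lambda>\<omega>. \<Sum>i\<in>I. real_cond_exp M G (indicator (E i)) \<omega>)"
      using real_cond_exp_int(1)[OF int] by (intro Bochner_Integration.integrable_sum) auto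
    fix A assume A: "A \<in> sets G"
    then have AM: "A \<in> events" using G by (auto simp: subalgebra_def)
    have "(\<integral>\<omega>. indicator A \<omega> * (\<Sum>i\<in>I. real_cond_exp M G (indicator (E i)) \<omega>) \<partial>M)
        = (\<Sum>i\<in>I. \<integral>\<omega>. indicator A \<omega> * real_cond_exp M G (indicator (E i)) \<omega> \<partial>M)"
      unfolding sum_distrib_left
      using integrable_mult_indicator[OF AM real_cond_exp_int(1)[OF int]]
      by (intro Bochner_Integration.integral_sum) simp
    also have "\<dots> = (\<Sum>i\<in>I. \<integral>\<omega>. indicator A \<omega> * indicator (E i) \<omega> \<partial>M)"
      using real_cond_exp_intA[OF int A] by (simp add: set_lebesgue_integral_def)
    also have "\<dots> = (\<Sum>i\<in>I. prob (A \<inter> E i))"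
      using AM E by (intro sum.cong) (simp_all add: indicator_inter_arith[symmetric])
    finally show "c * prob A \<le> (\<integral>\<omega>. indicator A \<omega> * (\<Sum>i\<in>I. real_cond_exp M G (indicator (E i)) \<omega>) \<partial>M)"
      using ge[OF A] by simp
  qed
qed

lemma (in finite_measure) measure_mult_le_integral_indicator:
  assumes A: "A \<in> sets M" and f: "integrable M f" and ge: "AE \<omega> in M. \<omega> \<in> A \<longrightarrow> c \<le> f \<omega>"
  shows "c * measure M A \<le> (\<integral>\<omega>. indicator A \<omega> * f \<omega> \<partial>M)"
proof -
  have "c * measure M A = (\<integral>\<omega>. indicator A \<omega> * c \<partial>M)" using A by (simp add: less_top[symmetric])
  also have "\<dots> \<le> (\<integral>\<omega>. indicator A \<omega> * f \<omega> \<partial>M)"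
  proof (rule integral_mono_AE)
    show "integrable M (\<lambda>\<omega>. indicator A \<omega> * c)" using A by (simp add: less_top[symmetric])
    show "integrable M (\<lambda>\<omega>. indicator A \<omega> * f \<omega>)" using integrable_mult_indicator[OF A f] by simp
    show "AE \<omega> in M. indicator A \<omega> * c \<le> indicator A \<omega> * f \<omega>"
      using ge by eventually_elim (simp add: indicator_def)
  qed
  finally show ?thesis .
qed

lemma (in finite_measure) measure_Int_ge_split:
  assumes sets: "C \<in> sets M" "D \<in> sets M" "E \<in> sets M"
    and inside: "q * measure M (C \<inter> D) \<le> measure M (C \<inter> D \<inter> E)"
    and outside: "q * measure M (C - D) \<le> measure M ((C - D) \<inter> E)"
  shows "q * measure M C \<le> measure M (C \<inter> E)"
proof -
  have "(C - D) \<inter> E = (C \<inter> E) - D" "C \<inter> D \<inter> E = (C \<inter> E) \<inter> D" by auto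
  then show ?thesis
    using inside outside finite_measure_Diff'[of C D] finite_measure_Diff'[of "C \<inter> E" D] sets
    by (simp add: algebra_simps)
qed

lemma (in prob_space) sum_prob_Int_ge_count:
  assumes I: "finite I" and A: "A \<in> events" and S: "\<And>i. i \<in> I \<Longrightarrow> S i \<in> events"
    and count: "AE \<omega> in M. n \<le> real (card {i\<in>I. \<omega> \<in> S i})"
  shows "n * prob A \<le> (\<Sum>i\<in>I. prob (A \<inter> S i))"
proof -
  have int: "integrable M (indicator (A \<inter> S i) :: 'a \<Rightarrow> real)" if "i \<in> I" for i
    using A S[OF that] by (intro integrable_real_indicator) (simp_all add: less_top[symmetric])
  have "n * prob A = (\<integral>\<omega>. indicator A \<omega> * n \<partial>M)" using A by (simp add: less_top[symmetric])
  also have "\<dots> \<le> (\<integral>\<omega>. (\<Sum>i\<in>I. indicator (A \<inter> S i) \<omega>) \<partial>M)"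
  proof (rule integral_mono_AE)
    show "integrable M (\<lambda>\<omega>. indicator A \<omega> * n)" using A by (simp add: less_top[symmetric])
    show "integrable M (\<lambda>\<omega>. \<Sum>i\<in>I. indicator (A \<inter> S i) \<omega> :: real)"
      using int by (rule Bochner_Integration.integrable_sum)
    from count show "AE \<omega> in M. indicator A \<omega> * n \<le> (\<Sum>i\<in>I. indicator (A \<inter> S i) \<omega>)"
    proof eventually_elim
      case (elim \<omega>)
      have "(\<Sum>i\<in>I. indicator (A \<inter> S i) \<omega> :: real) = indicator A \<omega> * real (card {i\<in>I. \<omega> \<in> S i})"
        using I by (simp add: indicator_def sum.If_cases Int_def)
      then show ?case using elim by (simp add: indicator_def)
    qed
  qed
  also have "\<dots> = (\<Sum>i\<in>I. prob (A \<inter> S i))"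
    using int A S by (subst Bochner_Integration.integral_sum) auto
  finally show ?thesis .
qed

lemma actions_eq: "actions = insert 0 (range (\<lambda>i. axis i (1::real)))"
proof (intro equalityI subsetI)
  fix v :: "real ^ 'a" assume "v \<in> actions"
  then have vals: "\<And>i. v $ i \<in> {0, 1}" and card: "card {i. v $ i \<noteq> 0} \<le> 1"
    by (auto simp: actions_def)
  show "v \<in> insert 0 (range (\<lambda>i. axis i 1))"
  proof (cases "v = 0")
    case False
    then obtain i where i: "v $ i \<noteq> 0" by (auto simp: vec_eq_iff)
    have "{j. v $ j \<noteq> 0} = {i}"
      using card i card_le_Suc0_iff_eq[of "{j. v $ j \<noteq> 0}"] by auto
    then have "v = axis i 1" using vals[of i] by (auto simp: vec_eq_iff axis_def)
    then show ?thesis by simp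
  qed simp
next
  fix v :: "real ^ 'a" assume "v \<in> insert 0 (range (\<lambda>i. axis i 1))"
  moreover have "{j. axis i (1::real) $ j \<noteq> 0} = {i}" for i :: 'a by (auto simp: axis_def)
  ultimately show "v \<in> actions" by (auto simp: actions_def axis_def)
qed

definition compatible_adherence :: "real ^ 'm \<Rightarrow> real ^ 'm \<Rightarrow> bool" where
  "compatible_adherence v \<delta> \<longleftrightarrow> v = 0 \<and> \<delta> = 0 \<or> (\<exists>i. v = axis i 1 \<and> (\<delta> = 0 \<or> \<delta> = axis i 1))"

lemma compatible_adherenceI:
  assumes v: "v \<in> actions" and vals: "\<And>i. \<delta> $ i \<in> {0, 1}" and supp: "\<And>i. v $ i = 0 \<Longrightarrow> \<delta> $ i = 0"
  shows "compatible_adherence v \<delta>"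
proof (cases "v = 0")
  case True
  then show ?thesis using supp by (simp add: compatible_adherence_def vec_eq_iff)
next
  case False
  then obtain i where i: "v = axis i 1" using v by (auto simp: actions_eq)
  have "\<delta> = \<delta> $ i *\<^sub>R axis i 1" using supp by (auto simp: vec_eq_iff axis_def i)
  then have "\<delta> = 0 \<or> \<delta> = axis i 1" using vals[of i] by auto
  then show ?thesis using i by (auto simp: compatible_adherence_def)
qed

lemma compatible_adherence_0: "compatible_adherence 0 \<delta> \<Longrightarrow> \<delta> = 0"
  by (auto simp: compatible_adherence_def vec_eq_iff axis_def)

lemma compatible_adherence_axis_inner:
  assumes "compatible_adherence (axis i 1) \<delta>"
  shows "l \<bullet> \<delta> = \<delta> $ i * l $ i"
proof -
  have "\<delta> = \<delta> $ i *\<^sub>R axis i 1"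
    using assms by (auto simp: compatible_adherence_def vec_eq_iff axis_def split: if_splits)
  then have "l \<bullet> \<delta> = \<delta> $ i * (l \<bullet> axis i 1)" by (metis inner_scaleR_right)
  then show ?thesis by (simp add: inner_axis)
qed

lemma compatible_adherence_inner_le:
  fixes lu ld :: "real ^ 'm"
  assumes "compatible_adherence v \<delta>"
  shows "\<bar>lu \<bullet> v + ld \<bullet> \<delta>\<bar> \<le> sqrt 2 * sqrt (lu \<bullet> lu + ld \<bullet> ld)"
proof -
  from assms consider "v = 0" "\<delta> = 0" | i where "v = axis i 1" "\<delta> = 0 \<or> \<delta> = axis i 1"
    unfolding compatible_adherence_def by blast
  then show ?thesis
  proof cases
    case (2 i)
    then have "\<bar>lu \<bullet> v + ld \<bullet> \<delta>\<bar> \<le> \<bar>lu $ i\<bar> + \<bar>ld $ i\<bar>" by (auto simp: inner_axis)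
    also have "\<dots> \<le> sqrt 2 * sqrt ((lu $ i)\<^sup>2 + (ld $ i)\<^sup>2)"
    proof -
      have "(\<bar>lu $ i\<bar> + \<bar>ld $ i\<bar>)\<^sup>2 \<le> 2 * ((lu $ i)\<^sup>2 + (ld $ i)\<^sup>2)"
        using zero_le_power2[of "\<bar>lu $ i\<bar> - \<bar>ld $ i\<bar>"] by (simp add: power2_eq_square algebra_simps)
      then show ?thesis by (simp add: real_le_rsqrt flip: real_sqrt_mult)
    qed
    also have "\<dots> \<le> sqrt 2 * sqrt (lu \<bullet> lu + ld \<bullet> ld)"
    proof -
      have "(y $ i)\<^sup>2 \<le> y \<bullet> y" for y :: "real ^ 'm"
        using power_mono[OF component_le_norm_cart[of y i] abs_ge_zero, where n = 2]
        by (simp add: power2_norm_eq_inner)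
      then show ?thesis by (intro mult_left_mono real_sqrt_le_mono add_mono) auto
    qed
    finally show ?thesis .
  qed simp
qed

definition bmsb_radius :: "real \<Rightarrow> nat \<Rightarrow> real" where
  "bmsb_radius \<tau> m = sqrt ((1 - \<tau>\<^sup>2) / (8 * real m))"

definition noise_threshold :: "real \<Rightarrow> nat \<Rightarrow> real" where
  "noise_threshold \<tau> m = sqrt (1 - \<tau>\<^sup>2) / \<tau> * ((1 + 4 * sqrt (real m)) / (2 * sqrt (2 * real m)))"

lemma bmsb_radius_nonneg: "\<bar>\<tau>\<bar> \<le> 1 \<Longrightarrow> 0 \<le> bmsb_radius \<tau> m"
  unfolding bmsb_radius_def by (simp add: abs_square_le_1)

lemma bmsb_radius_sq: "\<bar>\<tau>\<bar> \<le> 1 \<Longrightarrow> 8 * (bmsb_radius \<tau> m)\<^sup>2 = (1 - \<tau>\<^sup>2) / real m"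
  unfolding bmsb_radius_def by (cases "m = 0") (simp_all add: abs_square_le_1 field_simps)

lemma tau_noise_threshold:
  assumes \<tau>: "0 < \<tau>" "\<tau> < 1" and m: "0 < m"
  shows "\<tau> * noise_threshold \<tau> m = bmsb_radius \<tau> m + sqrt 2 * sqrt (1 - \<tau>\<^sup>2)"
proof -
  define s where "s = sqrt (1 - \<tau>\<^sup>2)"
  define q where "q = sqrt (2 * real m)"
  have q: "q > 0" using m by (simp add: q_def)
  have "sqrt (8 * real m) = sqrt (4 * (2 * real m))" by simp
  also have "\<dots> = 2 * q" by (simp only: real_sqrt_mult real_sqrt_four q_def)
  finally have "sqrt (8 * real m) = 2 * q" .
  then have radius: "bmsb_radius \<tau> m = s / (2 * q)"
    by (simp add: bmsb_radius_def s_def real_sqrt_divide)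
  have "2 * sqrt (real m) = sqrt 2 * q"
    unfolding q_def by (simp add: real_sqrt_mult mult.assoc)
  then have sqrt_2: "2 * sqrt (real m) / q = sqrt 2" using q by (simp add: field_simps)
  have "\<tau> * noise_threshold \<tau> m = s * (1 + 4 * sqrt (real m)) / (2 * q)"
    using \<tau> by (simp add: noise_threshold_def flip: s_def q_def)
  also have "\<dots> = s / (2 * q) + s * (2 * sqrt (real m) / q)"
    using q by (simp add: field_simps)
  finally have "\<tau> * noise_threshold \<tau> m = s / (2 * q) + sqrt 2 * s"
    by (simp add: sqrt_2)
  then show ?thesis by (simp add: radius s_def)
qed

lemma large_state_inner_ge:
  fixes lu ld v \<delta> :: "real ^ 'm"
  assumes unit: "lx\<^sup>2 + lu \<bullet> lu + ld \<bullet> ld = 1" and lx: "\<tau> \<le> \<bar>lx\<bar>" and \<tau>: "0 < \<tau>" "\<tau> < 1"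
    and compat: "compatible_adherence v \<delta>" and \<xi>: "noise_threshold \<tau> CARD('m) \<le> \<bar>\<xi>\<bar>"
  shows "bmsb_radius \<tau> CARD('m) \<le> \<bar>lx * \<xi> + lu \<bullet> v + ld \<bullet> \<delta>\<bar>"
proof -
  have "\<tau>\<^sup>2 \<le> lx\<^sup>2" using lx \<tau> by (metis abs_le_square_iff abs_of_pos)
  then have "lu \<bullet> lu + ld \<bullet> ld \<le> 1 - \<tau>\<^sup>2" using unit by simp
  then have "sqrt 2 * sqrt (lu \<bullet> lu + ld \<bullet> ld) \<le> sqrt 2 * sqrt (1 - \<tau>\<^sup>2)"
    by (intro mult_left_mono real_sqrt_le_mono) auto
  then have rest: "\<bar>lu \<bullet> v + ld \<bullet> \<delta>\<bar> \<le> sqrt 2 * sqrt (1 - \<tau>\<^sup>2)"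
    using compatible_adherence_inner_le[OF compat, of lu ld] by linarith
  have "0 \<le> noise_threshold \<tau> CARD('m)"
    using \<tau> by (simp add: noise_threshold_def abs_square_le_1)
  then have "\<tau> * noise_threshold \<tau> CARD('m) \<le> \<bar>lx * \<xi>\<bar>"
    using lx \<xi> \<tau> by (simp add: abs_mult mult_mono)
  then show ?thesis using rest tau_noise_threshold[OF \<tau>, of "CARD('m)"] by simp
qed

lemma small_state_coordinate_ge:
  fixes lu ld :: "real ^ 'm"
  assumes unit: "lx\<^sup>2 + lu \<bullet> lu + ld \<bullet> ld = 1" and lx: "\<bar>lx\<bar> < \<tau>"
  shows "\<exists>i. (1 - \<tau>\<^sup>2) / CARD('m) \<le> (lu $ i)\<^sup>2 + (ld $ i)\<^sup>2"
proof (rule ccontr)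
  assume "\<not> ?thesis"
  then have "(lu $ i)\<^sup>2 + (ld $ i)\<^sup>2 < (1 - \<tau>\<^sup>2) / CARD('m)" for i by (simp add: not_le)
  then have "(\<Sum>i\<in>UNIV. (lu $ i)\<^sup>2 + (ld $ i)\<^sup>2) < (\<Sum>i\<in>(UNIV::'m set). (1 - \<tau>\<^sup>2) / CARD('m))"
    by (intro sum_strict_mono) auto
  then have "lu \<bullet> lu + ld \<bullet> ld < 1 - \<tau>\<^sup>2"
    by (simp add: inner_vec_def power2_eq_square sum.distrib)
  moreover have "lx\<^sup>2 < \<tau>\<^sup>2" using power_strict_mono[of "\<bar>lx\<bar>" \<tau> 2] lx by simp
  ultimately show False using unit by simp
qed

lemma abs_partial_sums_ge:
  fixes \<xi> \<alpha> \<beta> g :: real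
  assumes "0 \<le> g" and "8 * g\<^sup>2 \<le> \<alpha>\<^sup>2 + \<beta>\<^sup>2"
  shows "g \<le> \<bar>\<xi>\<bar> \<or> g \<le> \<bar>\<xi> + \<alpha>\<bar> \<or> g \<le> \<bar>\<xi> + \<alpha> + \<beta>\<bar>"
proof (rule ccontr)
  assume "\<not> ?thesis"
  then have "\<bar>\<alpha>\<bar> < 2 * g" "\<bar>\<beta>\<bar> < 2 * g" by auto
  then have "\<alpha>\<^sup>2 < (2 * g)\<^sup>2" "\<beta>\<^sup>2 < (2 * g)\<^sup>2"
    using power_strict_mono[of "\<bar>\<alpha>\<bar>" "2 * g" 2] power_strict_mono[of "\<bar>\<beta>\<bar>" "2 * g" 2] by simp_all
  then show False using assms by (simp add: power_mult_distrib)
qed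

lemma rv_events_subset_sets: "f \<in> borel_measurable M \<Longrightarrow> rv_events M f \<subseteq> sets M"
  unfolding rv_events_def by (auto simp: measurable_sets)

lemma subalgebra_sigma_subset:
  assumes "S \<subseteq> sets M"
  shows "subalgebra M (sigma (space M) S)"
proof -
  have "S \<subseteq> Pow (space M)" using assms sets.sets_into_space by blast
  moreover have "sigma_sets (space M) S \<subseteq> sets M" using assms by (rule sets.sigma_sets_subset)
  ultimately show ?thesis by (simp add: subalgebra_def sets_measure_of)
qed

lemma sets_sigma_subset_mono:
  assumes "S \<subseteq> S'" and "S' \<subseteq> sets M"
  shows "sets (sigma (space M) S) \<subseteq> sets (sigma (space M) S')"
proof -
  have "S' \<subseteq> Pow (space M)" using assms(2) sets.sets_into_space by blast
  with assms(1) show ?thesis by (simp add: sets_measure_of sigma_sets_mono')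
qed

lemma measurable_sigma_rv_events:
  fixes f :: "'a \<Rightarrow> 'b::topological_space"
  assumes S: "S \<subseteq> sets M" and f: "rv_events M f \<subseteq> S"
  shows "f \<in> borel_measurable (sigma (space M) S)"
proof (rule measurableI)
  have S_space: "S \<subseteq> Pow (space M)" using S sets.sets_into_space by blast
  fix B :: "'b set" assume "B \<in> sets borel"
  then have "f -` B \<inter> space M \<in> S" using f unfolding rv_events_def by blast
  then show "f -` B \<inter> space (sigma (space M) S) \<in> sets (sigma (space M) S)"
    using S_space by (simp add: sets_measure_of sigma_sets.Basic)
qed simp

locale patient_model = prob_space M for M :: "'a measure" +
  fixes W :: "real measure"
    and x w :: "nat \<Rightarrow> 'a \<Rightarrow> real"
    and u d :: "nat \<Rightarrow> 'a \<Rightarrow> real ^ 'm"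
    and a abar bbar cbar mubar wbar sig_s sig_w r \<tau> :: real
    and b c \<mu> :: "real ^ 'm"
    and k :: nat
    and e :: "nat \<Rightarrow> 'a \<Rightarrow> bool" and \<eta> :: "nat \<Rightarrow> 'a \<Rightarrow> real ^ 'm"
  assumes a_range: "0 \<le> a" "a \<le> abar" "abar < 1"
    and b_bound: "\<forall>i. \<bar>b $ i\<bar> \<le> bbar" and c_bound: "\<forall>i. \<bar>c $ i\<bar> \<le> cbar"
    and mu_range: "\<forall>i. \<mu> $ i \<in> {-mubar..mubar}" and wbar_pos: "0 < wbar"
    and noise: "noise_law W wbar sig_s sig_w"
    and meas: "\<forall>t. x t \<in> borel_measurable M" "\<forall>t. w t \<in> borel_measurable M"
      "\<forall>t. u t \<in> borel_measurable M" "\<forall>t. d t \<in> borel_measurable M"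
    and init: "\<forall>\<omega>\<in>space M. x 0 \<omega> = 0 \<and> u 0 \<omega> = 0 \<and> d 0 \<omega> = 0"
    and dyn: "\<forall>t. \<forall>\<omega>\<in>space M. x (Suc t) \<omega> = a * x t \<omega> + b \<bullet> u t \<omega> + c \<bullet> d t \<omega> + w t \<omega>"
    and act: "\<forall>t. \<forall>\<omega>\<in>space M. t \<ge> 1 \<longrightarrow> u t \<omega> \<in> actions"
    and adh_vals: "\<forall>t i. \<forall>\<omega>\<in>space M. d t \<omega> $ i \<in> {0, 1}"
    and adh: "\<forall>t i. t \<ge> 1 \<longrightarrow> (AE \<omega> in M.
        real_cond_exp M (filtH M x u d w t) (\<lambda>\<omega>'. d t \<omega>' $ i) \<omega>
          = u t \<omega> $ i * sigmoid (x t \<omega> + \<mu> $ i))"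
    and noise_indep: "\<forall>t. \<forall>A\<in>sets (filtFw M x u d w t). \<forall>B\<in>sets borel.
        measure M (A \<inter> (w t -` B \<inter> space M)) = measure M A * measure W B"
    and r: "0 \<le> r" and k: "k \<ge> 1"
    and explore_sets: "\<forall>t\<ge>1. {\<omega>\<in>space M. e t \<omega>} \<in> sets (filtF M x u d w (t - 1))"
    and explore_uniform: "\<forall>t\<ge>1. \<forall>A\<in>sets (filtF M x u d w (t - 1)). \<forall>v\<in>actions.
        measure M (A \<inter> {\<omega>\<in>space M. \<eta> t \<omega> = v}) = measure M A / real (CARD('m) + 1)"
    and explore_action: "\<forall>t\<ge>1. \<forall>\<omega>\<in>space M. e t \<omega> \<longrightarrow> u t \<omega> = \<eta> t \<omega>"
    and explore_count: "\<forall>j. AE \<omega> in M. real (card {t\<in>{j+1..j+k}. e t \<omega>}) \<ge> of_int \<lceil>r * real k\<rceil>"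
    and tau: "0 < \<tau>" "\<tau> < 1"
begin

abbreviation "Fw \<equiv> filtFw M x u d w"
abbreviation "FF \<equiv> filtF M x u d w"
abbreviation "HH \<equiv> filtH M x u d w"

lemma measurable_model[measurable]:
  "x t \<in> borel_measurable M" "w t \<in> borel_measurable M"
  "u t \<in> borel_measurable M" "d t \<in> borel_measurable M"
  using meas by auto

lemma rv_events_in_events:
  "A \<in> rv_events M (x t) \<Longrightarrow> A \<in> events" "A \<in> rv_events M (w t) \<Longrightarrow> A \<in> events"
  "A \<in> rv_events M (u t) \<Longrightarrow> A \<in> events" "A \<in> rv_events M (d t) \<Longrightarrow> A \<in> events"
  using rv_events_subset_sets[OF measurable_model(1)] rv_events_subset_sets[OF measurable_model(2)]
    rv_events_subset_sets[OF measurable_model(3)] rv_events_subset_sets[OF measurable_model(4)]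
  by blast+

lemma subalgebra_Fw: "subalgebra M (Fw t)"
  and subalgebra_FF: "subalgebra M (FF t)"
  and subalgebra_HH: "subalgebra M (HH t)"
  unfolding filtFw_def filtF_def filtH_def
  by (intro subalgebra_sigma_subset subsetI; auto intro: rv_events_in_events)+

lemma space_filtrations[simp]: "space (Fw t) = space M" "space (FF t) = space M" "space (HH t) = space M"
  using subalgebra_Fw subalgebra_FF subalgebra_HH by (simp_all add: subalgebra_def)

lemma sets_filtrations_subset:
  "A \<in> sets (Fw t) \<Longrightarrow> A \<in> events" "A \<in> sets (FF t) \<Longrightarrow> A \<in> events" "A \<in> sets (HH t) \<Longrightarrow> A \<in> events"
  using subalgebra_Fw subalgebra_FF subalgebra_HH unfolding subalgebra_def by blast+

lemma sets_Fw_mono: "s \<le> t \<Longrightarrow> sets (Fw s) \<subseteq> sets (Fw t)"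
  unfolding filtFw_def by (rule sets_sigma_subset_mono) (auto intro: rv_events_in_events)

lemma sets_Fw_subset_FF: "j \<le> s \<Longrightarrow> sets (Fw j) \<subseteq> sets (FF s)"
  unfolding filtFw_def filtF_def
  by (rule sets_sigma_subset_mono) (auto 0 3 intro: rv_events_in_events dest: le_trans less_imp_le)

lemma sets_FF_subset_HH: "sets (FF s) \<subseteq> sets (HH (Suc s))"
  unfolding filtF_def filtH_def by (rule sets_sigma_subset_mono) (auto simp: less_Suc_eq_le intro: rv_events_in_events)

lemma measurable_filtrations[measurable]:
  "x t \<in> borel_measurable (Fw t)" "u t \<in> borel_measurable (Fw t)" "d t \<in> borel_measurable (Fw t)"
  "x t \<in> borel_measurable (FF t)" "u t \<in> borel_measurable (FF t)" "d t \<in> borel_measurable (FF t)"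
  "w t \<in> borel_measurable (FF t)" "x t \<in> borel_measurable (HH t)" "u t \<in> borel_measurable (HH t)"
  unfolding filtFw_def filtF_def filtH_def
  by (rule measurable_sigma_rv_events; auto intro: rv_events_in_events)+

definition drift :: "nat \<Rightarrow> 'a \<Rightarrow> real" where
  "drift s \<omega> = a * x s \<omega> + b \<bullet> u s \<omega> + c \<bullet> d s \<omega>"

lemma measurable_drift[measurable]: "drift s \<in> borel_measurable (Fw s)"
  unfolding drift_def by measurable

lemma x_Suc: "\<omega> \<in> space M \<Longrightarrow> x (Suc s) \<omega> = drift s \<omega> + w s \<omega>"
  using dyn by (simp add: drift_def)

lemma measurable_x_Suc_FF[measurable]: "x (Suc s) \<in> borel_measurable (FF s)"
proof -
  have "(\<lambda>\<omega>. drift s \<omega> + w s \<omega>) \<in> borel_measurable (FF s)" unfolding drift_def by measurable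
  then show ?thesis by (rule measurable_cong[THEN iffD1, rotated]) (simp add: x_Suc)
qed

lemma w_distr:
  assumes "B \<in> sets borel"
  shows "prob (w s -` B \<inter> space M) = measure W B"
proof -
  have "space M \<in> sets (Fw s)" by (metis sets.top space_filtrations(1))
  from noise_indep[rule_format, OF this assms] show ?thesis by (simp add: Int_absorb1 prob_space)
qed

lemma w_indep_Fw:
  "A \<in> sets (Fw s) \<Longrightarrow> B \<in> sets borel \<Longrightarrow>
    prob (A \<inter> (w s -` B \<inter> space M)) = prob A * prob (w s -` B \<inter> space M)"
  using noise_indep w_distr by simp

lemma abs_w_le: "AE \<omega> in M. \<bar>w s \<omega>\<bar> \<le> wbar"
proof -
  have "sets W = sets borel" and "AE y in W. \<bar>y\<bar> \<le> wbar" using noise by (auto simp: noise_law_def)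
  then have "measure W {y. wbar < \<bar>y\<bar>} = 0"
    using sets_eq_imp_space_eq[of W borel] by (simp add: measure_def AE_iff_measurable[OF _ refl] not_le)
  moreover have "{y::real. wbar < \<bar>y\<bar>} \<in> sets borel" by measurable
  ultimately have "prob {\<omega>\<in>space M. wbar < \<bar>w s \<omega>\<bar>} = 0"
    using w_distr[of "{y. wbar < \<bar>y\<bar>}" s] by (simp add: vimage_def Int_def conj_commute)
  then show ?thesis
    by (subst AE_iff_measurable[OF _ refl]) (auto simp: not_le emeasure_eq_measure)
qed

lemma u_actions: "\<omega> \<in> space M \<Longrightarrow> u t \<omega> \<in> actions"
  using act init by (cases t) (auto simp: actions_eq)

lemma adherence_values: "\<omega> \<in> space M \<Longrightarrow> d t \<omega> $ i = 0 \<or> d t \<omega> $ i = 1"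
  using adh_vals by blast

lemma integrable_adherence: "integrable M (\<lambda>\<omega>. d t \<omega> $ i)"
proof (rule integrable_const_bound[where B = 1])
  show "AE \<omega> in M. norm (d t \<omega> $ i) \<le> 1"
  proof (rule AE_I2)
    fix \<omega> assume "\<omega> \<in> space M"
    from adherence_values[OF this, of t i] show "norm (d t \<omega> $ i) \<le> 1" by auto
  qed
qed measurable

lemma adherence_set_integral:
  assumes t: "t \<ge> 1" and B: "B \<in> sets (HH t)"
  shows "(\<integral>\<omega>. indicator B \<omega> * d t \<omega> $ i \<partial>M)
       = (\<integral>\<omega>. indicator B \<omega> * (u t \<omega> $ i * sigmoid (x t \<omega> + \<mu> $ i)) \<partial>M)"
proof -
  interpret sigma_finite_subalgebra M "HH t"
    by (rule finite_measure_subalgebra_is_sigma_finite) (unfold_locales, rule subalgebra_HH)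
  have "B \<in> events" using B by (rule sets_filtrations_subset)
  have "(\<integral>\<omega>. indicator B \<omega> * d t \<omega> $ i \<partial>M)
      = (\<integral>\<omega>. indicator B \<omega> * real_cond_exp M (HH t) (\<lambda>\<omega>'. d t \<omega>' $ i) \<omega> \<partial>M)"
    using real_cond_exp_intA[OF integrable_adherence B] by (simp add: set_lebesgue_integral_def)
  also have "\<dots> = (\<integral>\<omega>. indicator B \<omega> * (u t \<omega> $ i * sigmoid (x t \<omega> + \<mu> $ i)) \<partial>M)"
    using adh t \<open>B \<in> events\<close> by (intro integral_cong_AE) (auto elim!: eventually_mono)
  finally show ?thesis .
qed

lemma adherence_supported: "AE \<omega> in M. u t \<omega> $ i = 0 \<longrightarrow> d t \<omega> $ i = 0"
proof (cases "t \<ge> 1")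
  case False
  then have "t = 0" by simp
  then show ?thesis using init by (auto intro!: AE_I2)
next
  case t: True
  define B where "B = {\<omega>\<in>space M. u t \<omega> $ i = 0}"
  have "{\<omega>\<in>space (HH t). u t \<omega> $ i = 0} \<in> sets (HH t)" by measurable
  then have BH: "B \<in> sets (HH t)" by (simp add: B_def)
  then have BM: "B \<in> events" by (rule sets_filtrations_subset)
  have "(\<lambda>\<omega>. indicator B \<omega> * (u t \<omega> $ i * sigmoid (x t \<omega> + \<mu> $ i))) = (\<lambda>\<omega>. 0)"
    by (auto simp: B_def indicator_def)
  then have integral_0: "(\<integral>\<omega>. indicator B \<omega> * d t \<omega> $ i \<partial>M) = 0"
    unfolding adherence_set_integral[OF t BH] by simp
  have nonneg: "AE \<omega> in M. 0 \<le> indicator B \<omega> * d t \<omega> $ i"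
  proof (rule AE_I2)
    fix \<omega> assume "\<omega> \<in> space M"
    from adherence_values[OF this, of t i] show "0 \<le> indicator B \<omega> * d t \<omega> $ i" by auto
  qed
  have "integrable M (\<lambda>\<omega>. indicator B \<omega> * d t \<omega> $ i)"
    using integrable_mult_indicator[OF BM integrable_adherence] by simp
  then have "AE \<omega> in M. indicator B \<omega> * d t \<omega> $ i = 0"
    using integral_nonneg_eq_0_iff_AE[OF _ nonneg] integral_0 by simp
  with AE_space show ?thesis by eventually_elim (auto simp: B_def indicator_def split: if_splits)
qed

lemma AE_compatible_adherence: "AE \<omega> in M. compatible_adherence (u t \<omega>) (d t \<omega>)"
proof -
  have "AE \<omega> in M. \<forall>i\<in>UNIV. u t \<omega> $ i = 0 \<longrightarrow> d t \<omega> $ i = 0"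
    by (rule AE_finite_allI) (auto intro: adherence_supported)
  with AE_space show ?thesis
  proof eventually_elim
    case (elim \<omega>)
    show ?case using elim adherence_values by (intro compatible_adherenceI u_actions) auto
  qed
qed

definition state_bound :: real where
  "state_bound = (bbar + cbar + wbar) / (1 - abar)"

lemma abs_x_le: "AE \<omega> in M. \<bar>x t \<omega>\<bar> \<le> state_bound"
proof (induction t)
  case 0
  have "0 \<le> bbar" "0 \<le> cbar" using b_bound c_bound by (meson abs_ge_zero order_trans)+
  then have "0 \<le> state_bound" using a_range wbar_pos by (simp add: state_bound_def)
  then show ?case using init by (auto intro!: AE_I2)
next
  case (Suc t)
  from Suc AE_compatible_adherence[of t] abs_w_le[of t] AE_space show ?case
  proof eventually_elim
    case (elim \<omega>)
    have "\<bar>b \<bullet> u t \<omega>\<bar> \<le> bbar" "\<bar>c \<bullet> d t \<omega>\<bar> \<le> cbar"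
      using elim(2) b_bound c_bound unfolding compatible_adherence_def
      by (auto simp: inner_axis intro: order_trans[OF abs_ge_zero])
    moreover have "\<bar>a * x t \<omega>\<bar> \<le> abar * state_bound"
      using elim(1) a_range by (simp add: abs_mult mult_mono)
    ultimately have "\<bar>x (Suc t) \<omega>\<bar> \<le> abar * state_bound + bbar + cbar + wbar"
      using elim(3,4) dyn by simp
    also have "\<dots> = state_bound"
      using a_range by (simp add: state_bound_def field_simps)
    finally show ?case .
  qed
qed

definition p_low :: real where
  "p_low = sigmoid (- state_bound - mubar)"

lemma p_low_le_sigmoid:
  assumes "\<bar>y\<bar> \<le> state_bound"
  shows "p_low \<le> sigmoid (y + \<mu> $ i)" and "p_low \<le> 1 - sigmoid (y + \<mu> $ i)"
  using assms mu_range[rule_format, of i] unfolding p_low_def one_minus_sigmoid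
  by (auto intro!: sigmoid_mono simp: abs_le_iff)

lemma p_low_bounds: "0 \<le> p_low" "p_low \<le> 1"
  unfolding p_low_def using sigmoid_pos sigmoid_less_1 by (auto intro: less_imp_le)

lemma prob_adherent:
  assumes t: "t \<ge> 1" and B: "B \<in> sets (HH t)" and treated: "\<And>\<omega>. \<omega> \<in> B \<Longrightarrow> u t \<omega> $ i = 1"
  shows "prob (B \<inter> {\<omega>\<in>space M. d t \<omega> $ i = 1}) = (\<integral>\<omega>. indicator B \<omega> * sigmoid (x t \<omega> + \<mu> $ i) \<partial>M)"
proof -
  have BM: "B \<in> events" using B by (rule sets_filtrations_subset)
  have "prob (B \<inter> {\<omega>\<in>space M. d t \<omega> $ i = 1}) = (\<integral>\<omega>. indicator (B \<inter> {\<omega>\<in>space M. d t \<omega> $ i = 1}) \<omega> \<partial>M)"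
    using BM by simp
  also have "\<dots> = (\<integral>\<omega>. indicator B \<omega> * d t \<omega> $ i \<partial>M)"
    using adherence_values by (intro Bochner_Integration.integral_cong) (auto simp: indicator_def)
  also have "\<dots> = (\<integral>\<omega>. indicator B \<omega> * sigmoid (x t \<omega> + \<mu> $ i) \<partial>M)"
    unfolding adherence_set_integral[OF t B] using treated
    by (intro Bochner_Integration.integral_cong) (auto simp: indicator_def)
  finally show ?thesis .
qed

lemma adherence_prob_ge:
  assumes t: "t \<ge> 1" and B: "B \<in> sets (HH t)" and treated: "\<And>\<omega>. \<omega> \<in> B \<Longrightarrow> u t \<omega> $ i = 1"
    and \<beta>: "\<beta> \<in> {0, 1}"
  shows "p_low * prob B \<le> prob (B \<inter> {\<omega>\<in>space M. d t \<omega> $ i = \<beta>})"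
proof -
  have BM: "B \<in> events" using B by (rule sets_filtrations_subset)
  define \<sigma> where "\<sigma> \<omega> = sigmoid (x t \<omega> + \<mu> $ i)" for \<omega>
  have \<sigma>_int: "integrable M \<sigma>"
    unfolding \<sigma>_def using sigmoid_pos sigmoid_less_1
    by (intro integrable_const_bound[where B = 1]) (auto intro!: AE_I2 simp: less_imp_le)
  have \<sigma>_ge: "AE \<omega> in M. p_low \<le> \<sigma> \<omega>" and one_minus_\<sigma>_ge: "AE \<omega> in M. p_low \<le> 1 - \<sigma> \<omega>"
    using abs_x_le[of t] by (auto simp: \<sigma>_def p_low_le_sigmoid elim!: eventually_mono)
  have adherent: "prob (B \<inter> {\<omega>\<in>space M. d t \<omega> $ i = 1}) = (\<integral>\<omega>. indicator B \<omega> * \<sigma> \<omega> \<partial>M)"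
    unfolding \<sigma>_def by (rule prob_adherent[OF t B treated])
  show ?thesis
  proof (cases "\<beta> = 1")
    case True
    show ?thesis
      unfolding True adherent using \<sigma>_ge
      by (intro measure_mult_le_integral_indicator BM \<sigma>_int) (auto elim!: eventually_mono)
  next
    case False
    then have \<beta>0: "\<beta> = 0" using \<beta> by simp
    have "B \<inter> {\<omega>\<in>space M. d t \<omega> $ i = 0} = B - (B \<inter> {\<omega>\<in>space M. d t \<omega> $ i = 1})"
      using adherence_values sets.sets_into_space[OF BM] by force
    then have "prob (B \<inter> {\<omega>\<in>space M. d t \<omega> $ i = 0}) = prob B - (\<integral>\<omega>. indicator B \<omega> * \<sigma> \<omega> \<partial>M)"
      using BM by (simp add: finite_measure_Diff' adherent Int_absorb1 flip: Int_assoc)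
    also have "\<dots> = (\<integral>\<omega>. indicator B \<omega> * (1 - \<sigma> \<omega>) \<partial>M)"
      using BM integrable_mult_indicator[OF BM \<sigma>_int]
      by (simp add: right_diff_distrib Bochner_Integration.integral_diff less_top[symmetric])
    also have "\<dots> \<ge> p_low * prob B"
      using one_minus_\<sigma>_ge \<sigma>_int
      by (intro measure_mult_le_integral_indicator BM) (auto elim!: eventually_mono)
    finally show ?thesis by (simp add: \<beta>0)
  qed
qed

lemma prob_explore_action:
  assumes C: "C \<in> sets (FF s)" and explored: "C \<subseteq> {\<omega>. e (Suc s) \<omega>}" and v: "v \<in> actions"
  shows "prob (C \<inter> {\<omega>\<in>space M. u (Suc s) \<omega> = v}) = prob C / real (CARD('m) + 1)"
proof -
  have "C \<subseteq> space M" using sets.sets_into_space[OF sets_filtrations_subset(2)[OF C]] .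
  then have "C \<inter> {\<omega>\<in>space M. u (Suc s) \<omega> = v} = C \<inter> {\<omega>\<in>space M. \<eta> (Suc s) \<omega> = v}"
    using explore_action explored by auto
  then show ?thesis using explore_uniform C v by simp
qed

lemma explore_untreated_ge:
  assumes C: "C \<in> sets (FF s)" and explored: "C \<subseteq> {\<omega>. e (Suc s) \<omega>}"
  shows "p_low / real (CARD('m) + 1) * prob C \<le> prob (C \<inter> {\<omega>\<in>space M. u (Suc s) \<omega> = 0})"
proof -
  have "p_low * (prob C / real (CARD('m) + 1)) \<le> prob C / real (CARD('m) + 1)"
    using p_low_bounds by (intro mult_left_le_one_le) auto
  then show ?thesis using prob_explore_action[OF C explored, of 0] by (simp add: actions_eq)
qed

lemma explore_treated_ge:
  assumes C: "C \<in> sets (FF s)" and explored: "C \<subseteq> {\<omega>. e (Suc s) \<omega>}" and \<beta>: "\<beta> \<in> {0, 1}"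
  shows "p_low / real (CARD('m) + 1) * prob C
    \<le> prob (C \<inter> {\<omega>\<in>space M. u (Suc s) \<omega> = axis i 1 \<and> d (Suc s) \<omega> $ i = \<beta>})"
proof -
  define B where "B = C \<inter> {\<omega>\<in>space M. u (Suc s) \<omega> = axis i 1}"
  have "{\<omega>\<in>space (HH (Suc s)). u (Suc s) \<omega> = axis i 1} \<in> sets (HH (Suc s))" by measurable
  then have B: "B \<in> sets (HH (Suc s))" using C sets_FF_subset_HH by (auto simp: B_def)
  have "p_low / real (CARD('m) + 1) * prob C = p_low * prob B"
    using prob_explore_action[OF C explored, of "axis i 1"] by (simp add: B_def actions_eq)
  also have "\<dots> \<le> prob (B \<inter> {\<omega>\<in>space M. d (Suc s) \<omega> $ i = \<beta>})"
    using \<beta> by (intro adherence_prob_ge B) (auto simp: B_def)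
  also have "B \<inter> {\<omega>\<in>space M. d (Suc s) \<omega> $ i = \<beta>}
      = C \<inter> {\<omega>\<in>space M. u (Suc s) \<omega> = axis i 1 \<and> d (Suc s) \<omega> $ i = \<beta>}"
    by (auto simp: B_def)
  finally show ?thesis .
qed

definition escape :: "real \<times> (real ^ 'm) \<times> (real ^ 'm) \<Rightarrow> nat \<Rightarrow> 'a set" where
  "escape l t = {\<omega>\<in>space M. bmsb_radius \<tau> CARD('m) \<le> \<bar>l \<bullet> (x t \<omega>, u t \<omega>, d t \<omega>)\<bar>}"

lemma escape_in_events[measurable]: "escape l t \<in> events"
  unfolding escape_def by measurable

lemma AE_escape_iff:
  "AE \<omega> in M.
    (u t \<omega> = 0 \<longrightarrow> (\<omega> \<in> escape (lx, lu, ld) t \<longleftrightarrow> bmsb_radius \<tau> CARD('m) \<le> \<bar>lx * x t \<omega>\<bar>)) \<and>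
    (u t \<omega> = axis i 1 \<longrightarrow> (\<omega> \<in> escape (lx, lu, ld) t \<longleftrightarrow>
       bmsb_radius \<tau> CARD('m) \<le> \<bar>lx * x t \<omega> + lu $ i + d t \<omega> $ i * ld $ i\<bar>))"
  using AE_compatible_adherence[of t] AE_space
proof eventually_elim
  case (elim \<omega>)
  then show ?case
    using compatible_adherence_0[of "d t \<omega>"] compatible_adherence_axis_inner[of i "d t \<omega>" ld]
    by (auto simp: escape_def inner_axis add.assoc)
qed

definition p_noise :: real where
  "p_noise = measure W {y. noise_threshold \<tau> CARD('m) \<le> \<bar>y\<bar>}"

lemma large_state_step:
  assumes unit: "lx\<^sup>2 + lu \<bullet> lu + ld \<bullet> ld = 1" and lx: "\<tau> \<le> \<bar>lx\<bar>" and A: "A \<in> sets (Fw s)"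
  shows "p_noise * prob A \<le> prob (A \<inter> escape (lx, lu, ld) (Suc s))"
proof -
  define S where "S = {p :: real \<times> real. noise_threshold \<tau> CARD('m) \<le> \<bar>fst p + snd p\<bar>}"
  have "S \<in> sets borel" unfolding S_def by (intro borel_closed closed_Collect_le continuous_intros)
  then have S: "S \<in> sets (borel \<Otimes>\<^sub>M borel)" by (simp only: borel_prod)
  have "p_noise * prob A \<le> prob (A \<inter> {\<omega>\<in>space M. (drift s \<omega>, w s \<omega>) \<in> S})"
  proof (rule indep_freezing_ge[OF subalgebra_Fw A measurable_drift measurable_model(2) w_indep_Fw S])
    fix \<xi> :: real
    have "{y. noise_threshold \<tau> CARD('m) \<le> \<bar>\<xi> + y\<bar>} \<in> sets borel" by measurable
    from w_distr[OF this, of s]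
    have "prob {\<omega>\<in>space M. (\<xi>, w s \<omega>) \<in> S} = measure W {y. noise_threshold \<tau> CARD('m) \<le> \<bar>\<xi> + y\<bar>}"
      by (simp add: S_def vimage_def Int_def conj_commute)
    then show "p_noise \<le> prob {\<omega>\<in>space M. (\<xi>, w s \<omega>) \<in> S}"
      unfolding p_noise_def using noise_law_shifted_tail_ge[OF noise] by simp
  qed
  also have "\<dots> \<le> prob (A \<inter> escape (lx, lu, ld) (Suc s))"
  proof (rule finite_measure_mono_AE)
    show "A \<inter> escape (lx, lu, ld) (Suc s) \<in> events" using sets_filtrations_subset(1)[OF A] by simp
    from AE_compatible_adherence[of "Suc s"] show "AE \<omega> in M. \<omega> \<in> A \<inter> {\<omega>\<in>space M. (drift s \<omega>, w s \<omega>) \<in> S}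
        \<longrightarrow> \<omega> \<in> A \<inter> escape (lx, lu, ld) (Suc s)"
    proof eventually_elim
      case (elim \<omega>)
      show ?case
      proof
        assume "\<omega> \<in> A \<inter> {\<omega>\<in>space M. (drift s \<omega>, w s \<omega>) \<in> S}"
        then have \<omega>: "\<omega> \<in> A" "\<omega> \<in> space M" and "noise_threshold \<tau> CARD('m) \<le> \<bar>x (Suc s) \<omega>\<bar>"
          by (auto simp: S_def x_Suc)
        from large_state_inner_ge[OF unit lx tau elim this(3)]
        show "\<omega> \<in> A \<inter> escape (lx, lu, ld) (Suc s)" using \<omega> by (simp add: escape_def add.assoc)
      qed
    qed
  qed
  finally show ?thesis .
qed

text \<open>The partition of the exploratory event by \<open>D0\<close> and \<open>D1\<close> is decided by
  \<open>x (Suc s)\<close>, which is \<open>F\<^sub>s\<close>-measurable; on each part the exploration picks the action and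
  adherence that make \<open>l \<bullet> z (Suc s)\<close> leave the ball with probability at least \<open>q\<close>.\<close>
lemma explore_step:
  assumes unit: "lx\<^sup>2 + lu \<bullet> lu + ld \<bullet> ld = 1" and lx: "\<bar>lx\<bar> < \<tau>" and A: "A \<in> sets (FF s)"
  shows "p_low / real (CARD('m) + 1) * prob (A \<inter> {\<omega>\<in>space M. e (Suc s) \<omega>})
    \<le> prob (A \<inter> escape (lx, lu, ld) (Suc s))"
proof -
  define g where "g = bmsb_radius \<tau> CARD('m)"
  define q where "q = p_low / real (CARD('m) + 1)"
  define E where "E = escape (lx, lu, ld) (Suc s)"
  define C where "C = A \<inter> {\<omega>\<in>space M. e (Suc s) \<omega>}"
  have g: "0 \<le> g" "8 * g\<^sup>2 = (1 - \<tau>\<^sup>2) / CARD('m)"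
    using tau by (simp_all add: g_def bmsb_radius_nonneg bmsb_radius_sq)
  obtain i where "8 * g\<^sup>2 \<le> (lu $ i)\<^sup>2 + (ld $ i)\<^sup>2"
    using small_state_coordinate_ge[OF unit lx] g(2) by auto
  note three_values = abs_partial_sums_ge[OF g(1) this]
  define D0 where "D0 = {\<omega>\<in>space M. g \<le> \<bar>lx * x (Suc s) \<omega>\<bar>}"
  define D1 where "D1 = {\<omega>\<in>space M. g \<le> \<bar>lx * x (Suc s) \<omega> + lu $ i\<bar>}"
  have "{\<omega>\<in>space (FF s). g \<le> \<bar>lx * x (Suc s) \<omega>\<bar>} \<in> sets (FF s)"
    "{\<omega>\<in>space (FF s). g \<le> \<bar>lx * x (Suc s) \<omega> + lu $ i\<bar>} \<in> sets (FF s)" by measurable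
  then have D: "D0 \<in> sets (FF s)" "D1 \<in> sets (FF s)" by (simp_all add: D0_def D1_def)
  have "{\<omega>\<in>space M. e (Suc s) \<omega>} \<in> sets (FF s)" using explore_sets by auto
  then have C: "C \<in> sets (FF s)" "C \<subseteq> {\<omega>. e (Suc s) \<omega>}" using A by (auto simp: C_def)
  have events: "C \<in> events" "D0 \<in> events" "D1 \<in> events" "E \<in> events"
    using C D by (simp_all add: sets_filtrations_subset E_def)
  note escape_iff = AE_escape_iff[of "Suc s" lx lu ld i, folded g_def E_def]
  have "q * prob (C \<inter> D0) \<le> prob (C \<inter> D0 \<inter> {\<omega>\<in>space M. u (Suc s) \<omega> = 0})"
    unfolding q_def using C D by (intro explore_untreated_ge) auto
  also have "\<dots> \<le> prob (C \<inter> D0 \<inter> E)"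
    by (rule finite_measure_mono_AE, use escape_iff in eventually_elim) (use events in \<open>auto simp: D0_def\<close>)
  finally have untreated: "q * prob (C \<inter> D0) \<le> prob (C \<inter> D0 \<inter> E)" .
  let ?treated = "\<lambda>\<beta>. {\<omega>\<in>space M. u (Suc s) \<omega> = axis i 1 \<and> d (Suc s) \<omega> $ i = \<beta>}"
  have "q * prob ((C - D0) \<inter> D1) \<le> prob ((C - D0) \<inter> D1 \<inter> ?treated 0)"
    unfolding q_def using C D by (intro explore_treated_ge) auto
  also have "\<dots> \<le> prob ((C - D0) \<inter> D1 \<inter> E)"
    by (rule finite_measure_mono_AE, use escape_iff in eventually_elim) (use events in \<open>auto simp: D1_def\<close>)
  finally have non_adherent: "q * prob ((C - D0) \<inter> D1) \<le> prob ((C - D0) \<inter> D1 \<inter> E)" .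
  have "q * prob (C - D0 - D1) \<le> prob ((C - D0 - D1) \<inter> ?treated 1)"
    unfolding q_def using C D by (intro explore_treated_ge) auto
  also have "\<dots> \<le> prob ((C - D0 - D1) \<inter> E)"
    by (rule finite_measure_mono_AE, use escape_iff in eventually_elim)
      (use events three_values in \<open>auto simp: D0_def D1_def\<close>)
  finally have adherent: "q * prob (C - D0 - D1) \<le> prob ((C - D0 - D1) \<inter> E)" .
  have "q * prob C \<le> prob (C \<inter> E)"
    using events untreated non_adherent adherent
    by (intro measure_Int_ge_split[of C D0 E] measure_Int_ge_split[of "C - D0" D1 E]) auto
  also have "\<dots> \<le> prob (A \<inter> E)"
    using events sets_filtrations_subset(2)[OF A] by (intro finite_measure_mono) (auto simp: C_def)
  finally show ?thesis by (simp add: q_def C_def E_def)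
qed

definition p_bmsb :: real where
  "p_bmsb = min p_noise (r * p_low / real (CARD('m) + 1))"

lemma p_bmsb_bounds: "0 \<le> p_bmsb" "p_bmsb \<le> 1"
proof -
  have "prob_space W" using noise by (simp add: noise_law_def)
  then have "0 \<le> p_noise" "p_noise \<le> 1" by (simp_all add: p_noise_def prob_space.prob_le_1)
  then show "0 \<le> p_bmsb" "p_bmsb \<le> 1" using p_low_bounds r by (auto simp: p_bmsb_def)
qed

lemma large_state_block_sum_ge:
  assumes unit: "lx\<^sup>2 + lu \<bullet> lu + ld \<bullet> ld = 1" and lx: "\<tau> \<le> \<bar>lx\<bar>" and A: "A \<in> sets (Fw j)"
  shows "real k * p_bmsb * prob A \<le> (\<Sum>t\<in>{j+1..j+k}. prob (A \<inter> escape (lx, lu, ld) t))"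
proof -
  have "p_bmsb * prob A \<le> prob (A \<inter> escape (lx, lu, ld) t)" if t: "t \<in> {j+1..j+k}" for t
  proof -
    obtain s where s: "t = Suc s" "j \<le> s" using t by (cases t) auto
    then have "A \<in> sets (Fw s)" using A sets_Fw_mono by auto
    from large_state_step[OF unit lx this] show ?thesis
      unfolding s p_bmsb_def by (meson measure_nonneg min.cobounded1 mult_right_mono order_trans)
  qed
  then have "(\<Sum>t\<in>{j+1..j+k}. p_bmsb * prob A) \<le> (\<Sum>t\<in>{j+1..j+k}. prob (A \<inter> escape (lx, lu, ld) t))"
    by (rule sum_mono)
  then show ?thesis by (simp add: mult.assoc)
qed

lemma explore_block_sum_ge:
  assumes unit: "lx\<^sup>2 + lu \<bullet> lu + ld \<bullet> ld = 1" and lx: "\<bar>lx\<bar> < \<tau>" and A: "A \<in> sets (Fw j)"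
  shows "real k * p_bmsb * prob A \<le> (\<Sum>t\<in>{j+1..j+k}. prob (A \<inter> escape (lx, lu, ld) t))"
proof -
  define q where "q = p_low / real (CARD('m) + 1)"
  have q: "0 \<le> q" using p_low_bounds by (simp add: q_def)
  have explored: "{\<omega>\<in>space M. e t \<omega>} \<in> events" if "t \<in> {j+1..j+k}" for t
    using explore_sets that sets_filtrations_subset(2) by (metis Suc_eq_plus1 atLeastAtMost_iff le_add2 le_trans)
  have "p_bmsb \<le> q * r" by (simp add: p_bmsb_def q_def mult.commute)
  then have "real k * p_bmsb \<le> q * (r * real k)"
    using mult_left_mono[of p_bmsb "q * r" "real k"] by (simp add: ac_simps)
  also have "\<dots> \<le> q * of_int \<lceil>r * real k\<rceil>" using q by (intro mult_left_mono) auto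
  finally have "real k * p_bmsb * prob A \<le> q * of_int \<lceil>r * real k\<rceil> * prob A"
    by (simp add: mult_right_mono)
  also have "\<dots> \<le> q * (\<Sum>t\<in>{j+1..j+k}. prob (A \<inter> {\<omega>\<in>space M. e t \<omega>}))"
    unfolding mult.assoc
  proof (intro mult_left_mono q sum_prob_Int_ge_count)
    show "A \<in> events" using A by (rule sets_filtrations_subset)
    show "AE \<omega> in M. of_int \<lceil>r * real k\<rceil> \<le> real (card {t\<in>{j+1..j+k}. \<omega> \<in> {\<omega>\<in>space M. e t \<omega>}})"
      using explore_count[rule_format, of j] AE_space by eventually_elim simp
  qed (use explored in auto)
  also have "\<dots> \<le> (\<Sum>t\<in>{j+1..j+k}. prob (A \<inter> escape (lx, lu, ld) t))"
    unfolding sum_distrib_left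
  proof (rule sum_mono)
    fix t assume "t \<in> {j+1..j+k}"
    then obtain s where s: "t = Suc s" "j \<le> s" by (cases t) auto
    then have "A \<in> sets (FF s)" using A sets_Fw_subset_FF by auto
    from explore_step[OF unit lx this]
    show "q * prob (A \<inter> {\<omega>\<in>space M. e t \<omega>}) \<le> prob (A \<inter> escape (lx, lu, ld) t)"
      by (simp add: s q_def)
  qed
  finally show ?thesis .
qed

lemma AE_block_escape_ge:
  assumes "norm l = 1"
  shows "AE \<omega> in M. p_bmsb \<le> 1 / real k * (\<Sum>i = 1..k. real_cond_exp M (Fw j) (indicator (escape l (j + i))) \<omega>)"
proof -
  obtain lx lu ld where l: "l = (lx, lu, ld)" by (cases l)
  then have unit: "lx\<^sup>2 + lu \<bullet> lu + ld \<bullet> ld = 1"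
    using assms by (simp add: norm_eq_1 power2_eq_square)
  have "AE \<omega> in M. real k * p_bmsb \<le> (\<Sum>i\<in>{1..k}. real_cond_exp M (Fw j) (indicator (escape l (j + i))) \<omega>)"
  proof (rule AE_sum_cond_prob_ge[OF subalgebra_Fw])
    fix A assume A: "A \<in> sets (Fw j)"
    have "real k * p_bmsb * prob A \<le> (\<Sum>t\<in>{j+1..j+k}. prob (A \<inter> escape l t))"
      unfolding l using large_state_block_sum_ge[OF unit _ A] explore_block_sum_ge[OF unit _ A] by force
    then show "real k * p_bmsb * prob A \<le> (\<Sum>i\<in>{1..k}. prob (A \<inter> escape l (j + i)))"
      using sum.shift_bounds_cl_nat_ivl[of "\<lambda>t. prob (A \<inter> escape l t)" 1 j k] by (simp add: add.commute)
  qed simp_all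
  then show ?thesis
    by eventually_elim (use k in \<open>simp add: field_simps\<close>)
qed

lemma bmsb:
  "BMSB M Fw (\<lambda>t \<omega>. (x t \<omega>, u t \<omega>, d t \<omega>)) k (\<lambda>v. ((1 - \<tau>\<^sup>2) / (8 * real CARD('m))) *\<^sub>R v) p_bmsb"
proof -
  define \<gamma> where "\<gamma> = (1 - \<tau>\<^sup>2) / (8 * real CARD('m))"
  have \<gamma>: "0 < \<gamma>" using tau by (simp add: \<gamma>_def abs_square_less_1)
  have escape_eq: "{\<omega>\<in>space M. sqrt (l \<bullet> \<gamma> *\<^sub>R l) \<le> \<bar>l \<bullet> (x t \<omega>, u t \<omega>, d t \<omega>)\<bar>} = escape l t"
    if "norm l = 1" for l :: "real \<times> (real ^ 'm) \<times> (real ^ 'm)" and t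
    using that by (simp add: escape_def \<gamma>_def bmsb_radius_def norm_eq_1)
  show ?thesis
    unfolding BMSB_def \<gamma>_def[symmetric]
  proof (intro conjI allI impI)
    show "0 < k" using k by simp
    show "linear (\<lambda>v :: real \<times> (real ^ 'm) \<times> (real ^ 'm). \<gamma> *\<^sub>R v)" by (rule linear_scaleR)
    show "v \<bullet> \<gamma> *\<^sub>R w = \<gamma> *\<^sub>R v \<bullet> w" for v w :: "real \<times> (real ^ 'm) \<times> (real ^ 'm)" by simp
    show "0 < v \<bullet> \<gamma> *\<^sub>R v" if "v \<noteq> 0" for v :: "real \<times> (real ^ 'm) \<times> (real ^ 'm)"
      using that \<gamma> by simp
    show "0 \<le> p_bmsb" "p_bmsb \<le> 1" by (rule p_bmsb_bounds)+
    show "subalgebra M (Fw t)" for t by (rule subalgebra_Fw)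
    show "sets (Fw s) \<subseteq> sets (Fw t)" if "s \<le> t" for s t using that by (rule sets_Fw_mono)
    show "(\<lambda>\<omega>. (x t \<omega>, u t \<omega>, d t \<omega>)) \<in> borel_measurable (Fw t)" for t by measurable
  qed (simp only: escape_eq AE_block_escape_ge)
qed

end

theorem propositionA1:
  fixes M :: "'a measure" and W :: "real measure"
    and x w :: "nat \<Rightarrow> 'a \<Rightarrow> real"
    and u d :: "nat \<Rightarrow> 'a \<Rightarrow> real ^ 'm"
    and a abar bbar cbar mubar wbar sig_s sig_w r \<tau> :: real
    and b c \<mu> :: "real ^ 'm"
    and k :: nat
  assumes P: "prob_space M"
    and params: "0 < abar" "abar < 1" "0 \<le> a" "a \<le> abar"
      "\<forall>i. \<bar>b $ i\<bar> \<le> bbar" "\<forall>i. \<bar>c $ i\<bar> \<le> cbar" "\<forall>i. \<mu> $ i \<in> {-mubar..mubar}"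
      "wbar > 0"
    and noise: "noise_law W wbar sig_s sig_w"
    and meas: "\<forall>t. x t \<in> borel_measurable M" "\<forall>t. w t \<in> borel_measurable M"
      "\<forall>t. u t \<in> borel_measurable M" "\<forall>t. d t \<in> borel_measurable M"
    and init: "\<forall>\<omega>\<in>space M. x 0 \<omega> = 0 \<and> u 0 \<omega> = 0 \<and> d 0 \<omega> = 0"
    and dyn: "\<forall>t. \<forall>\<omega>\<in>space M. x (Suc t) \<omega> = a * x t \<omega> + b \<bullet> u t \<omega> + c \<bullet> d t \<omega> + w t \<omega>"
    and act: "\<forall>t. \<forall>\<omega>\<in>space M. t \<ge> 1 \<longrightarrow> u t \<omega> \<in> actions"
    and adh_vals: "\<forall>t i. \<forall>\<omega>\<in>space M. d t \<omega> $ i \<in> {0, 1}"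
    and adh: "\<forall>t i. t \<ge> 1 \<longrightarrow> (AE \<omega> in M.
        real_cond_exp M (filtH M x u d w t) (\<lambda>\<omega>'. d t \<omega>' $ i) \<omega>
          = u t \<omega> $ i * sigmoid (x t \<omega> + \<mu> $ i))"
    and noise_indep: "\<forall>t. \<forall>A\<in>sets (filtFw M x u d w t). \<forall>B\<in>sets borel.
        measure M (A \<inter> (w t -` B \<inter> space M)) = measure M A * measure W B"
    and r: "0 < r" "r \<le> 1" and k: "k \<ge> 1"
    and explore: "\<exists>(e :: nat \<Rightarrow> 'a \<Rightarrow> bool) (\<eta> :: nat \<Rightarrow> 'a \<Rightarrow> real ^ 'm).
        (\<forall>t\<ge>1. {\<omega>\<in>space M. e t \<omega>} \<in> sets (filtF M x u d w (t - 1)))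
      \<and> (\<forall>t\<ge>1. \<eta> t \<in> borel_measurable M \<and> (\<forall>\<omega>\<in>space M. \<eta> t \<omega> \<in> actions))
      \<and> (\<forall>t\<ge>1. \<forall>A\<in>sets (filtF M x u d w (t - 1)). \<forall>v\<in>actions.
            measure M (A \<inter> {\<omega>\<in>space M. \<eta> t \<omega> = v}) = measure M A / real (CARD('m) + 1))
      \<and> (\<forall>t\<ge>1. \<forall>\<omega>\<in>space M. e t \<omega> \<longrightarrow> u t \<omega> = \<eta> t \<omega>)
      \<and> (\<forall>j. AE \<omega> in M. real (card {t\<in>{j+1..j+k}. e t \<omega>}) \<ge> of_int \<lceil>r * real k\<rceil>)"
    and tau: "0 < \<tau>" "\<tau> < 1"
    and p1_pos: "measure W {y. \<bar>y\<bar> \<ge> sqrt (1 - \<tau>\<^sup>2) / \<tau> *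
        ((1 + 4 * sqrt (real CARD('m))) / (2 * sqrt (2 * real CARD('m))))} > 0"
  shows "BMSB M (filtFw M x u d w)
      (\<lambda>t \<omega>. (x t \<omega>, u t \<omega>, d t \<omega>)) k
      (\<lambda>v. ((1 - \<tau>\<^sup>2) / (8 * real CARD('m))) *\<^sub>R v)
      (min (measure W {y. \<bar>y\<bar> \<ge> sqrt (1 - \<tau>\<^sup>2) / \<tau> *
              ((1 + 4 * sqrt (real CARD('m))) / (2 * sqrt (2 * real CARD('m))))})
           (r * sigmoid (- ((bbar + cbar + wbar) / (1 - abar)) - mubar) / real (CARD('m) + 1)))"
proof -
  \<comment> \<open>The bound does not use \<open>p1_pos\<close>, \<open>0 < abar\<close>, \<open>r \<le> 1\<close> or the measurability of \<open>\<eta>\<close>.\<close>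
  from explore obtain e :: "nat \<Rightarrow> 'a \<Rightarrow> bool" and \<eta> :: "nat \<Rightarrow> 'a \<Rightarrow> real ^ 'm" where explore_facts:
    "\<forall>t\<ge>1. {\<omega>\<in>space M. e t \<omega>} \<in> sets (filtF M x u d w (t - 1))"
    "\<forall>t\<ge>1. \<forall>A\<in>sets (filtF M x u d w (t - 1)). \<forall>v\<in>actions.
       measure M (A \<inter> {\<omega>\<in>space M. \<eta> t \<omega> = v}) = measure M A / real (CARD('m) + 1)"
    "\<forall>t\<ge>1. \<forall>\<omega>\<in>space M. e t \<omega> \<longrightarrow> u t \<omega> = \<eta> t \<omega>"
    "\<forall>j. AE \<omega> in M. real (card {t\<in>{j+1..j+k}. e t \<omega>}) \<ge> of_int \<lceil>r * real k\<rceil>"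
    by blast
  have "0 \<le> r" using r(1) by simp
  interpret patient_model M W x w u d a abar bbar cbar mubar wbar sig_s sig_w r \<tau> b c \<mu> k e \<eta>
    by (intro patient_model.intro patient_model_axioms.intro P;
        fact params noise meas init dyn act adh_vals adh noise_indep \<open>0 \<le> r\<close> k explore_facts tau)
  show ?thesis
    using bmsb unfolding p_bmsb_def p_noise_def noise_threshold_def p_low_def state_bound_def .
qed

end
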